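(* Fix $\boldsymbol\beta=(\beta_1,\dots,\beta_N)\in(0,\infty)^N$, $v\in\mathbb R$ with $\beta_i+v>0$ for all $i$, and $\mathbf L_1'\in\mathbb R^N$; write $\min(\boldsymbol\beta)=\min_i\beta_i$. Then both functions $$u\mapsto\int_{\mathbb R^N}\mathbf U^{\boldsymbol\beta,u,v}(\mathbf L_1'|\mathbf L_1)\,\mathrm P^{\boldsymbol\beta,u,v}_{\mathrm{stat\,LG}}(\mathbf L_1)\,d\mathbf L_1\qquad\text{and}\qquad u\mapsto\mathrm P^{\tau_1\boldsymbol\beta,u,v}_{\mathrm{stat\,LG}}(\mathbf L_1')$$ are real analytic on $(-\min(\boldsymbol\beta),\infty)$, where $\tau_1\boldsymbol\beta=(\beta_2,\dots,\beta_N,\beta_1)$.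
   Context: $\mathbf U^{\boldsymbol\beta,u,v}(\mathbf L_1'|\mathbf L_1)$ is the transition probability density of the following one-step update: set $h(j,0)=L_1(j)$ for $0\le j\le N$ (with $L_1(0)=0$) and $z=e^h$; with independent weights $\varpi_{1,1}\sim\Gamma^{-1}(\beta_1+u)$, $\varpi_{1+j,1}\sim\Gamma^{-1}(\beta_1+\beta_{j+1})$ for $1\le j\le N-1$, $\varpi_{N+1,1}\sim\Gamma^{-1}(\beta_1+v)$, define $z(1,1)=\varpi_{1,1}z(1,0)$, $z(1+j,1)=\varpi_{1+j,1}(z(j,1)+z(1+j,0))$ for $1\le j\le N-1$ successively, $z(N+1,1)=\varpi_{N+1,1}z(N,1)$, and $L_1'(j)=\log z(1+j,1)-\log z(1,1)$, $1\le j\le N$. Here $\Gamma^{-1}(\theta)$ has density $x^{-\theta-1}e^{-1/x}/\Gamma(\theta)$ on $(0,\infty)$. $\mathrm P^{\boldsymbol\beta,u,v}_{\mathrm{stat\,LG}}$ is the marginal density of $\mathbf L_1$ under $\mathbb P^{\boldsymbol\beta,u,v}_{\mathrm{stat\,LG}}(\mathbf L)=V(\mathbf L)\mathbb P^{\boldsymbol\beta,\boldsymbol\beta}_{\mathrm{LGRW}}(\mathbf L)/\mathbb E^{\boldsymbol\beta,\boldsymbol\beta}_{\mathrm{LGRW}}[V]$, where $\mathbb P^{\boldsymbol\beta,\boldsymbol\beta}_{\mathrm{LGRW}}$ is the density of two independent walks $\mathbf L_1,\mathbf L_2\in\mathbb R^N$ with $L_i(0)=0$ and independent increments $L_i(j)-L_i(j-1)$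 of density $e^{-\beta_jy-e^{-y}}/\Gamma(\beta_j)$, and $V(\mathbf L)=\big(\sum_{j=1}^Ne^{L_2(j)-L_1(j-1)}\big)^{-(u+v)}e^{-v(L_1(N)-L_2(N))}$ (the normalizing expectation is finite whenever $\beta_i+u>0$, $\beta_i+v>0$). *)

theory Defs
  imports "HOL-Analysis.Analysis"
begin

definition real_analytic_on :: "(real \<Rightarrow> real) \<Rightarrow> real set \<Rightarrow> bool" where
  "real_analytic_on f S \<longleftrightarrow>
     (\<forall>x\<in>S. \<exists>r>0. \<exists>a::nat \<Rightarrow> real.
        \<forall>y. \<bar>y - x\<bar> < r \<longrightarrow> (\<lambda>n. a n * (y - x) ^ n) sums f y)"

text \<open>Vectors in R^N are functions nat => real, coordinates 1..N;
  Lebesgue measure on R^N.\<close>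
definition RN :: "nat \<Rightarrow> (nat \<Rightarrow> real) measure" where
  "RN N = PiM {1..N} (\<lambda>_. lborel)"

definition ext0 :: "(nat \<Rightarrow> real) \<Rightarrow> nat \<Rightarrow> real" where
  "ext0 L j = (if j = 0 then 0 else L j)"

definition invgamma_dens :: "real \<Rightarrow> real \<Rightarrow> real" where
  "invgamma_dens \<theta> x = (if x > 0 then x powr (-\<theta> - 1) * exp (-1 / x) / Gamma \<theta> else 0)"

definition lg_incr_dens :: "real \<Rightarrow> real \<Rightarrow> real" where
  "lg_incr_dens b y = exp (- b * y - exp (- y)) / Gamma b"

text \<open>Density (w.r.t. Lebesgue measure on the positions L(1..N)) of one walk.\<close>
definition lgrw_dens :: "nat \<Rightarrow> (nat \<Rightarrow> real) \<Rightarrow> (nat \<Rightarrow> real) \<Rightarrow> real" where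
  "lgrw_dens N \<beta> L = (\<Prod>j=1..N. lg_incr_dens (\<beta> j) (ext0 L j - ext0 L (j - 1)))"

definition Vfun :: "nat \<Rightarrow> real \<Rightarrow> real \<Rightarrow> (nat \<Rightarrow> real) \<Rightarrow> (nat \<Rightarrow> real) \<Rightarrow> real" where
  "Vfun N u v L1 L2 =
     (\<Sum>j=1..N. exp (ext0 L2 j - ext0 L1 (j - 1))) powr (- (u + v))
     * exp (- v * (ext0 L1 N - ext0 L2 N))"

definition statLG_norm :: "nat \<Rightarrow> (nat \<Rightarrow> real) \<Rightarrow> real \<Rightarrow> real \<Rightarrow> real" where
  "statLG_norm N \<beta> u v =
     (\<integral>L1. (\<integral>L2. Vfun N u v L1 L2 * lgrw_dens N \<beta> L1 * lgrw_dens N \<beta> L2 \<partial>RN N) \<partial>RN N)"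

definition statLG_marg :: "nat \<Rightarrow> (nat \<Rightarrow> real) \<Rightarrow> real \<Rightarrow> real \<Rightarrow> (nat \<Rightarrow> real) \<Rightarrow> real" where
  "statLG_marg N \<beta> u v L1 =
     (\<integral>L2. Vfun N u v L1 L2 * lgrw_dens N \<beta> L1 * lgrw_dens N \<beta> L2 \<partial>RN N) / statLG_norm N \<beta> u v"

text \<open>Transition density U(L'|L) of the one-step update, obtained by conditioning on
  w = varpi_{1,1} and the triangular change of variables
  varpi_{1+j,1} = exp(L'(j)) / c_j, with
  c_j = exp(L'(j-1)) + exp(L(1+j)) / (w exp(L(1)))  (1 <= j <= N-1),  c_N = exp(L'(N-1)),
  whose inverse Jacobian is prod_j varpi_{1+j,1}.\<close>
definition U_theta :: "nat \<Rightarrow> (nat \<Rightarrow> real) \<Rightarrow> real \<Rightarrow> nat \<Rightarrow> real" where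
  "U_theta N \<beta> v j = (if j < N then \<beta> 1 + \<beta> (j + 1) else \<beta> 1 + v)"

definition U_c :: "nat \<Rightarrow> (nat \<Rightarrow> real) \<Rightarrow> (nat \<Rightarrow> real) \<Rightarrow> real \<Rightarrow> nat \<Rightarrow> real" where
  "U_c N L' L w j =
     (if j < N then exp (ext0 L' (j - 1)) + exp (L (j + 1)) / (w * exp (L 1))
      else exp (ext0 L' (j - 1)))"

definition U_trans :: "nat \<Rightarrow> (nat \<Rightarrow> real) \<Rightarrow> real \<Rightarrow> real \<Rightarrow> (nat \<Rightarrow> real) \<Rightarrow> (nat \<Rightarrow> real) \<Rightarrow> real" where
  "U_trans N \<beta> u v L' L =
     (\<integral>w. invgamma_dens (\<beta> 1 + u) w *
        (\<Prod>j=1..N. invgamma_dens (U_theta N \<beta> v j) (exp (L' j) / U_c N L' L w j)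
                     * (exp (L' j) / U_c N L' L w j)) \<partial>lborel)"

definition tau1 :: "nat \<Rightarrow> (nat \<Rightarrow> real) \<Rightarrow> nat \<Rightarrow> real" where
  "tau1 N \<beta> i = (if i < N then \<beta> (i + 1) else \<beta> 1)"

end

theory Submission
  imports Defs "HOL-Complex_Analysis.Complex_Analysis" "HOL-Real_Asymp.Real_Asymp"
begin

text \<open>Up to the entire factor \<open>1/\<Gamma>(\<beta>\<^sub>1 + u)\<close> of the weight \<open>\<varpi>\<^sub>1\<^sub>,\<^sub>1\<close> and division by the
  normalising constant, both functions are Laplace transforms \<open>u \<mapsto> \<integral> h e\<^sup>-\<^sup>u\<^sup>a\<close> of nonnegative
  functions: \<open>u\<close> enters \<open>V\<close> only through \<open>S\<^sup>-\<^sup>u\<close>, where \<open>S\<close> is the sum in \<open>V\<close>, and the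
  weight \<open>\<varpi>\<^sub>1\<^sub>,\<^sub>1 = w\<close> only through \<open>w\<^sup>-\<^sup>u\<close>. A Laplace transform that is finite on an open
  interval extends holomorphically to a complex neighbourhood of every point of it (expand
  \<open>e\<^sup>-\<^sup>u\<^sup>a\<close> into its power series and use dominated convergence), hence is real analytic.
  Finiteness for \<open>u > -min \<beta>\<close> comes from dominating \<open>V\<close> by finitely many exponentials of
  linear functions of the walk increments with coefficients below \<open>\<beta>\<close>, which are integrable
  because log-gamma variables have exponential moments of all orders below their parameter.
  The normalising constant is positive, so the quotients are analytic as well.\<close>

section \<open>Holomorphic extensions and Laplace transforms\<close>

definition has_holomorphic_extension :: "(real \<Rightarrow> real) \<Rightarrow> real \<Rightarrow> bool" where
  "has_holomorphic_extension f x \<longleftrightarrow> (\<exists>r>0. \<exists>F. F holomorphic_on ball (complex_of_real x) r \<and>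
      (\<forall>y. \<bar>y - x\<bar> < r \<longrightarrow> F (complex_of_real y) = complex_of_real (f y)))"

lemma real_analytic_onI_holomorphic_extension:
  assumes "\<And>x. x \<in> S \<Longrightarrow> has_holomorphic_extension f x"
  shows "real_analytic_on f S"
  unfolding real_analytic_on_def
proof
  fix x assume "x \<in> S"
  then obtain r F where r: "r > 0" and hol: "F holomorphic_on ball (complex_of_real x) r"
    and eq: "\<And>y. \<bar>y - x\<bar> < r \<Longrightarrow> F (complex_of_real y) = complex_of_real (f y)"
    using assms unfolding has_holomorphic_extension_def by blast
  define a where "a n = Re ((deriv ^^ n) F (complex_of_real x) / fact n)" for n
  have "(\<lambda>n. a n * (y - x) ^ n) sums f y" if y: "\<bar>y - x\<bar> < r" for y
  proof -
    have "complex_of_real y \<in> ball (complex_of_real x) r"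
      using y by (simp add: dist_norm norm_minus_commute flip: of_real_diff)
    from sums_Re[OF holomorphic_power_series[OF hol this]]
    have "(\<lambda>n. Re ((deriv ^^ n) F (complex_of_real x) / fact n * complex_of_real ((y - x) ^ n))) sums f y"
      by (simp add: eq[OF y] flip: of_real_diff of_real_power)
    moreover have "Re (c * complex_of_real t) = Re c * t" for c t by simp
    ultimately show ?thesis
      by (simp only: a_def)
  qed
  with r show "\<exists>r>0. \<exists>a. \<forall>y. \<bar>y - x\<bar> < r \<longrightarrow> (\<lambda>n. a n * (y - x) ^ n) sums f y" by blast
qed

lemma has_holomorphic_extension_cong:
  assumes "has_holomorphic_extension g x" "d > 0" "\<And>y. \<bar>y - x\<bar> < d \<Longrightarrow> f y = g y"
  shows "has_holomorphic_extension f x"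
proof -
  obtain r F where r: "r > 0" and hol: "F holomorphic_on ball (complex_of_real x) r"
    and eq: "\<And>y. \<bar>y - x\<bar> < r \<Longrightarrow> F (complex_of_real y) = complex_of_real (g y)"
    using assms unfolding has_holomorphic_extension_def by blast
  show ?thesis unfolding has_holomorphic_extension_def
    using r assms(2,3) eq
    by (intro exI[of _ "min r d"] exI[of _ F] conjI) (auto intro: holomorphic_on_subset[OF hol])
qed

lemma has_holomorphic_extension_mult:
  assumes "has_holomorphic_extension f x" "has_holomorphic_extension g x"
  shows "has_holomorphic_extension (\<lambda>y. f y * g y) x"
proof -
  obtain r F where r: "r > 0" and hol: "F holomorphic_on ball (complex_of_real x) r"
    and eq: "\<And>y. \<bar>y - x\<bar> < r \<Longrightarrow> F (complex_of_real y) = complex_of_real (f y)"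
    using assms unfolding has_holomorphic_extension_def by blast
  obtain s G where s: "s > 0" and holG: "G holomorphic_on ball (complex_of_real x) s"
    and eqG: "\<And>y. \<bar>y - x\<bar> < s \<Longrightarrow> G (complex_of_real y) = complex_of_real (g y)"
    using assms unfolding has_holomorphic_extension_def by blast
  show ?thesis unfolding has_holomorphic_extension_def
    using r s eq eqG
    by (intro exI[of _ "min r s"] exI[of _ "\<lambda>z. F z * G z"] conjI)
       (auto intro!: holomorphic_on_mult holomorphic_on_subset[OF hol] holomorphic_on_subset[OF holG])
qed

lemma has_holomorphic_extension_divide:
  assumes "has_holomorphic_extension f x" "has_holomorphic_extension g x" "g x \<noteq> 0"
  shows "has_holomorphic_extension (\<lambda>y. f y / g y) x"
proof -
  obtain r F where r: "r > 0" and hol: "F holomorphic_on ball (complex_of_real x) r"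
    and eq: "\<And>y. \<bar>y - x\<bar> < r \<Longrightarrow> F (complex_of_real y) = complex_of_real (f y)"
    using assms unfolding has_holomorphic_extension_def by blast
  obtain s G where s: "s > 0" and holG: "G holomorphic_on ball (complex_of_real x) s"
    and eqG: "\<And>y. \<bar>y - x\<bar> < s \<Longrightarrow> G (complex_of_real y) = complex_of_real (g y)"
    using assms unfolding has_holomorphic_extension_def by blast
  have "G (complex_of_real x) \<noteq> 0" using eqG[of x] s assms(3) by simp
  moreover have "isCont G (complex_of_real x)"
    using holomorphic_on_imp_continuous_on[OF holG] s
    by (simp add: continuous_on_interior)
  ultimately obtain t where t: "t > 0" and G0: "\<And>z. dist (complex_of_real x) z < t \<Longrightarrow> G z \<noteq> 0"
    using continuous_at_avoid by metis
  define q where "q = min r (min s t)"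
  have "(\<lambda>z. F z / G z) holomorphic_on ball (complex_of_real x) q"
    using G0 by (intro holomorphic_on_divide holomorphic_on_subset[OF hol] holomorphic_on_subset[OF holG])
      (auto simp: q_def)
  moreover have "q > 0" using r s t by (simp add: q_def)
  ultimately show ?thesis unfolding has_holomorphic_extension_def
    using eq eqG by (intro exI[of _ q] exI[of _ "\<lambda>z. F z / G z"] conjI) (auto simp: q_def)
qed

lemma has_holomorphic_extension_rGamma: "has_holomorphic_extension (\<lambda>u. rGamma (b + u)) x"
  unfolding has_holomorphic_extension_def
proof (intro exI[of _ 1] exI[of _ "\<lambda>z. rGamma (complex_of_real b + z)"] conjI allI impI)
  show "(\<lambda>z. rGamma (complex_of_real b + z)) holomorphic_on ball (complex_of_real x) 1"
    by (intro holomorphic_intros)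
  show "rGamma (complex_of_real b + complex_of_real y) = complex_of_real (rGamma (b + y))" for y
    by (simp only: of_real_add[symmetric] rGamma_complex_of_real)
qed simp

lemma sum_exp_series_le_exp:
  fixes t :: real assumes "0 \<le> t"
  shows "(\<Sum>n<K. t ^ n / fact n) \<le> exp t"
proof -
  have s: "(\<lambda>n. t ^ n / fact n) sums exp t"
    using exp_converges[of t] by (simp add: divide_inverse mult.commute scaleR_conv_of_real)
  then show ?thesis
    using sum_le_suminf[of "\<lambda>n. t ^ n / fact n" "{..<K}"] assms by (auto simp: sums_iff)
qed

lemma exp_series_term_le_exp:
  fixes t :: real assumes "0 \<le> t"
  shows "t ^ n / fact n \<le> exp t"
proof -
  have "t ^ n / fact n \<le> (\<Sum>k<Suc n. t ^ k / fact k)"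
    using assms by (intro member_le_sum) auto
  also have "\<dots> \<le> exp t" by (rule sum_exp_series_le_exp[OF assms])
  finally show ?thesis .
qed

lemma integrable_laplace_coeff:
  fixes g a w :: "'a \<Rightarrow> real"
  assumes [measurable]: "g \<in> borel_measurable M" "a \<in> borel_measurable M"
    and w: "integrable M w" and \<rho>: "0 < \<rho>"
    and gnn: "\<And>y. 0 \<le> g y" and dom: "\<And>y. g y * exp (\<rho> * \<bar>a y\<bar>) \<le> w y"
  shows "integrable M (\<lambda>y. g y * (- a y) ^ n / fact n)"
proof (rule Bochner_Integration.integrable_bound[of _ "\<lambda>y. w y / \<rho> ^ n"])
  show "integrable M (\<lambda>y. w y / \<rho> ^ n)" using w by auto
  show "AE y in M. norm (g y * (- a y) ^ n / fact n) \<le> norm (w y / \<rho> ^ n)"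
  proof (intro AE_I2)
    fix y
    have "norm (g y * (- a y) ^ n / fact n) = g y * ((\<rho> * \<bar>a y\<bar>) ^ n / fact n) / \<rho> ^ n"
      using gnn[of y] \<rho> by (simp add: abs_mult power_abs power_mult_distrib)
    also have "\<dots> \<le> g y * exp (\<rho> * \<bar>a y\<bar>) / \<rho> ^ n"
      using gnn[of y] \<rho> by (intro divide_right_mono mult_left_mono exp_series_term_le_exp) auto
    also have "\<dots> \<le> norm (w y / \<rho> ^ n)"
      using dom[of y] \<rho> by (auto intro: divide_right_mono)
    finally show "norm (g y * (- a y) ^ n / fact n) \<le> norm (w y / \<rho> ^ n)" .
  qed
qed measurable

lemma laplace_power_series_sums:
  fixes g a w :: "'a \<Rightarrow> real"
  assumes [measurable]: "g \<in> borel_measurable M" "a \<in> borel_measurable M"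
    and w: "integrable M w" and \<rho>: "0 < \<rho>"
    and gnn: "\<And>y. 0 \<le> g y" and dom: "\<And>y. g y * exp (\<rho> * \<bar>a y\<bar>) \<le> w y"
    and q: "norm q < \<rho>"
  shows "(\<lambda>n. complex_of_real (\<integral>y. g y * (- a y) ^ n / fact n \<partial>M) * q ^ n)
           sums (\<integral>y. complex_of_real (g y) * exp (complex_of_real (- a y) * q) \<partial>M)"
proof -
  define s where "s K y = (\<Sum>n<K. complex_of_real (g y * (- a y) ^ n / fact n) * q ^ n)" for K y
  have "(\<integral>y. s K y \<partial>M) = (\<Sum>n<K. \<integral>y. complex_of_real (g y * (- a y) ^ n / fact n) * q ^ n \<partial>M)" for K
    unfolding s_def
    by (intro Bochner_Integration.integral_sum integrable_mult_left integrable_of_real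
        integrable_laplace_coeff[OF assms(1-6)])
  then have partial_sums: "(\<Sum>n<K. complex_of_real (\<integral>y. g y * (- a y) ^ n / fact n \<partial>M) * q ^ n) = (\<integral>y. s K y \<partial>M)" for K
    by (simp only: integral_mult_left_zero integral_complex_of_real)
  have "(\<lambda>K. \<integral>y. s K y \<partial>M) \<longlonglongrightarrow> (\<integral>y. complex_of_real (g y) * exp (complex_of_real (- a y) * q) \<partial>M)"
  proof (rule integral_dominated_convergence[where w = w])
    show "AE y in M. (\<lambda>K. s K y) \<longlonglongrightarrow> complex_of_real (g y) * exp (complex_of_real (- a y) * q)"
    proof (intro AE_I2)
      fix y
      have "(\<lambda>n. complex_of_real (g y) * ((complex_of_real (- a y) * q) ^ n /\<^sub>R fact n)) sums
            (complex_of_real (g y) * exp (complex_of_real (- a y) * q))"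
        by (rule sums_mult[OF exp_converges])
      moreover have "complex_of_real (g y) * ((complex_of_real (- a y) * q) ^ n /\<^sub>R fact n)
            = complex_of_real (g y * (- a y) ^ n / fact n) * q ^ n" for n
        by (simp only: scaleR_conv_of_real power_mult_distrib of_real_mult of_real_divide
            of_real_power of_real_fact mult_ac divide_inverse)
      ultimately show "(\<lambda>K. s K y) \<longlonglongrightarrow> complex_of_real (g y) * exp (complex_of_real (- a y) * q)"
        by (simp add: sums_def s_def)
    qed
    show "AE y in M. norm (s K y) \<le> w y" for K
    proof (intro AE_I2)
      fix y
      have "norm (s K y) \<le> (\<Sum>n<K. norm (complex_of_real (g y * (- a y) ^ n / fact n) * q ^ n))"
        unfolding s_def by (rule norm_sum)
      also have "\<dots> = g y * (\<Sum>n<K. (\<bar>a y\<bar> * norm q) ^ n / fact n)"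
        unfolding sum_distrib_left
      proof (rule sum.cong[OF refl])
        fix n
        have "norm (complex_of_real (g y * (- a y) ^ n / fact n) * q ^ n) = \<bar>g y * (- a y) ^ n / fact n\<bar> * norm q ^ n"
          by (simp only: norm_mult norm_of_real norm_power)
        also have "\<dots> = g y * ((\<bar>a y\<bar> * norm q) ^ n / fact n)"
          using gnn[of y] by (simp add: abs_mult power_abs power_mult_distrib)
        finally show "norm (complex_of_real (g y * (- a y) ^ n / fact n) * q ^ n) = g y * ((\<bar>a y\<bar> * norm q) ^ n / fact n)" .
      qed
      also have "\<dots> \<le> g y * exp (\<bar>a y\<bar> * norm q)"
        by (intro mult_left_mono sum_exp_series_le_exp gnn) auto
      also have "\<dots> \<le> g y * exp (\<rho> * \<bar>a y\<bar>)"
        using q gnn[of y] by (intro mult_left_mono) (auto simp: mult.commute mult_right_mono)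
      finally show "norm (s K y) \<le> w y" using dom[of y] by linarith
    qed
  qed (use w in \<open>unfold s_def, measurable\<close>)
  then show ?thesis
    unfolding sums_def partial_sums .
qed

lemma has_holomorphic_extension_laplace:
  fixes M :: "'a measure" and h a :: "'a \<Rightarrow> real"
  assumes [measurable]: "h \<in> borel_measurable M" "a \<in> borel_measurable M"
    and hnn: "\<And>y. 0 \<le> h y"
    and fin: "\<And>u. c < u \<Longrightarrow> u < d \<Longrightarrow> (\<integral>\<^sup>+y. ennreal (h y * exp (- u * a y)) \<partial>M) < \<infinity>"
    and x: "c < x" "x < d"
  shows "has_holomorphic_extension (\<lambda>u. \<integral>y. h y * exp (- u * a y) \<partial>M) x"
proof -
  define \<rho> where "\<rho> = min (x - c) (d - x) / 2"
  have \<rho>: "0 < \<rho>" "c < x - \<rho>" "x + \<rho> < d" using x unfolding \<rho>_def by (auto simp: min_def field_simps)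
  define g where "g y = h y * exp (- x * a y)" for y
  define w where "w y = h y * exp (- (x - \<rho>) * a y) + h y * exp (- (x + \<rho>) * a y)" for y
  have gm[measurable]: "g \<in> borel_measurable M" unfolding g_def by measurable
  have gnn: "0 \<le> g y" for y using hnn by (simp add: g_def)
  have int: "integrable M (\<lambda>y. h y * exp (- u * a y))" if "c < u" "u < d" for u
    by (rule integrableI_bounded) (use fin[OF that] hnn in \<open>auto simp: abs_mult\<close>)
  have w: "integrable M w"
    unfolding w_def using int[of "x - \<rho>"] int[of "x + \<rho>"] \<rho> by auto
  have dom: "g y * exp (\<rho> * \<bar>a y\<bar>) \<le> w y" for y
  proof -
    have "exp (\<rho> * \<bar>a y\<bar>) \<le> exp (\<rho> * a y) + exp (- \<rho> * a y)"
      by (cases "a y \<ge> 0") (simp_all add: add_increasing add_increasing2)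
    then have "g y * exp (\<rho> * \<bar>a y\<bar>) \<le> g y * (exp (\<rho> * a y) + exp (- \<rho> * a y))"
      by (rule mult_left_mono[OF _ gnn])
    also have "\<dots> = w y"
      by (simp add: g_def w_def algebra_simps flip: exp_add)
    finally show ?thesis .
  qed
  define F where "F z = (\<integral>y. complex_of_real (g y) * exp (complex_of_real (- a y) * (z - complex_of_real x)) \<partial>M)" for z
  have "F holomorphic_on ball (complex_of_real x) \<rho>"
  proof (rule power_series_holomorphic)
    fix z assume "z \<in> ball (complex_of_real x) \<rho>"
    then have "norm (z - complex_of_real x) < \<rho>" by (simp add: dist_norm norm_minus_commute)
    then show "(\<lambda>n. complex_of_real (\<integral>y. g y * (- a y) ^ n / fact n \<partial>M) * (z - complex_of_real x) ^ n) sums F z"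
      unfolding F_def by (rule laplace_power_series_sums[OF gm assms(2) w \<rho>(1) gnn dom])
  qed
  moreover have "F (complex_of_real y) = complex_of_real (\<integral>v. h v * exp (- y * a v) \<partial>M)" for y
  proof -
    have "F (complex_of_real y) = (\<integral>v. complex_of_real (g v * exp (- a v * (y - x))) \<partial>M)"
      unfolding F_def by (simp add: exp_of_real flip: of_real_mult of_real_diff of_real_minus)
    also have "\<dots> = complex_of_real (\<integral>v. g v * exp (- a v * (y - x)) \<partial>M)"
      by (rule integral_complex_of_real)
    also have "(\<lambda>v. g v * exp (- a v * (y - x))) = (\<lambda>v. h v * exp (- y * a v))"
      by (rule ext) (simp add: g_def algebra_simps flip: exp_add)
    finally show ?thesis .
  qed
  ultimately show ?thesis unfolding has_holomorphic_extension_def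
    using \<rho>(1) by blast
qed

section \<open>Product integrals and the walk increments\<close>

lemma iterated_integral_eq_pair_integral:
  fixes f :: "'a \<times> 'b \<Rightarrow> real"
  assumes "sigma_finite_measure M1" "sigma_finite_measure M2"
    and fm: "f \<in> borel_measurable (M1 \<Otimes>\<^sub>M M2)" and f0: "\<And>z. 0 \<le> f z"
    and fin: "(\<integral>\<^sup>+x. (\<integral>\<^sup>+y. ennreal (f (x, y)) \<partial>M2) \<partial>M1) < \<infinity>"
  shows "(\<integral>x. (\<integral>y. f (x, y) \<partial>M2) \<partial>M1) = (\<integral>z. f z \<partial>(M1 \<Otimes>\<^sub>M M2))"
    and "(\<integral>\<^sup>+z. ennreal (f z) \<partial>(M1 \<Otimes>\<^sub>M M2)) < \<infinity>"
proof -
  interpret M2: sigma_finite_measure M2 by fact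
  interpret pair_sigma_finite M1 M2 using assms(1,2) by (simp add: pair_sigma_finite_def)
  have "(\<integral>\<^sup>+x. (\<integral>\<^sup>+y. ennreal (f (x, y)) \<partial>M2) \<partial>M1) = (\<integral>\<^sup>+z. ennreal (f z) \<partial>(M1 \<Otimes>\<^sub>M M2))"
    by (rule M2.nn_integral_fst) (use fm in measurable)
  with fin show fin2: "(\<integral>\<^sup>+z. ennreal (f z) \<partial>(M1 \<Otimes>\<^sub>M M2)) < \<infinity>" by simp
  have "integrable (M1 \<Otimes>\<^sub>M M2) f"
    by (rule integrableI_bounded) (use fm fin2 f0 in auto)
  then show "(\<integral>x. (\<integral>y. f (x, y) \<partial>M2) \<partial>M1) = (\<integral>z. f z \<partial>(M1 \<Otimes>\<^sub>M M2))"
    by (rule integral_fst')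
qed

lemma integral_pos_if_pos:
  fixes f :: "'a \<Rightarrow> real"
  assumes int: "integrable M f" and pos: "\<And>x. 0 < f x" and sp: "emeasure M (space M) \<noteq> 0"
  shows "0 < (\<integral>x. f x \<partial>M)"
proof -
  have "(\<integral>x. f x \<partial>M) \<noteq> 0"
  proof
    assume "(\<integral>x. f x \<partial>M) = 0"
    then have "AE x in M. f x = 0"
      using integral_nonneg_eq_0_iff_AE[OF int] pos by (auto intro: less_imp_le)
    then have "AE x in M. False" using pos by (auto elim: AE_mp simp: less_le)
    then have "space M \<in> null_sets M" by (simp add: AE_iff_null_sets)
    then show False using sp by (auto dest: null_setsD1)
  qed
  moreover have "0 \<le> (\<integral>x. f x \<partial>M)" using pos by (intro integral_nonneg_AE) (auto intro: less_imp_le)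
  ultimately show ?thesis by simp
qed

lemma emeasure_space_pair_nonzero:
  assumes "sigma_finite_measure M2" "emeasure M1 (space M1) \<noteq> 0" "emeasure M2 (space M2) \<noteq> 0"
  shows "emeasure (M1 \<Otimes>\<^sub>M M2) (space (M1 \<Otimes>\<^sub>M M2)) \<noteq> 0"
proof -
  interpret sigma_finite_measure M2 by fact
  have "emeasure (M1 \<Otimes>\<^sub>M M2) (space M1 \<times> space M2) = emeasure M1 (space M1) * emeasure M2 (space M2)"
    by (rule emeasure_pair_measure_Times) auto
  then show ?thesis using assms(2,3) by (simp add: space_pair_measure)
qed

definition incr :: "(nat \<Rightarrow> real) \<Rightarrow> nat \<Rightarrow> real" where
  "incr L k = ext0 L k - ext0 L (k - 1)"

lemma ext0_eq_sum_incr: "ext0 L m = (\<Sum>k=1..m. incr L k)"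
  by (induction m) (simp add: ext0_def, simp add: incr_def)

lemma lgrw_dens_eq_prod_incr: "lgrw_dens N \<beta> L = (\<Prod>j=1..N. lg_incr_dens (\<beta> j) (incr L j))"
  by (simp add: lgrw_dens_def incr_def)

lemma lg_incr_dens_pos: "0 < b \<Longrightarrow> 0 < lg_incr_dens b y"
  by (simp add: lg_incr_dens_def Gamma_real_pos)

lemma lgrw_dens_pos: "\<forall>k\<in>{1..N}. 0 < \<beta> k \<Longrightarrow> 0 < lgrw_dens N \<beta> L"
  unfolding lgrw_dens_eq_prod_incr by (intro prod_pos) (auto intro: lg_incr_dens_pos)

lemma sigma_finite_RN: "sigma_finite_measure (RN N)"
proof -
  interpret product_sigma_finite "\<lambda>_::nat. lborel :: real measure" by standard
  show ?thesis unfolding RN_def by (rule sigma_finite) simp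
qed

lemma space_RN: "space (RN N) = PiE {1..N} (\<lambda>_. UNIV)"
  by (simp add: RN_def space_PiM)

text \<open>Outside \<open>{1..N}\<close> every point of \<open>space (RN N)\<close> takes the value \<open>undefined\<close>, so all
  coordinates are measurable.\<close>
lemma measurable_component_RN: "(\<lambda>L. L j) \<in> borel_measurable (RN N)"
proof (cases "j \<in> {1..N}")
  case True
  then have "(\<lambda>L. L j) \<in> measurable (RN N) lborel"
    unfolding RN_def by (rule measurable_component_singleton)
  then show ?thesis by simp
next
  case False
  have "(\<lambda>L. undefined :: real) \<in> borel_measurable (RN N)" by simp
  moreover have "\<And>L. L \<in> space (RN N) \<Longrightarrow> undefined = L j"
    using False by (auto simp: space_RN PiE_def extensional_def)
  ultimately show ?thesis by (rule measurable_cong[THEN iffD1, rotated])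
qed

lemma measurable_ext0_RN[measurable]: "(\<lambda>L. ext0 L j) \<in> borel_measurable (RN N)"
  unfolding ext0_def using measurable_component_RN by measurable

lemma measurable_incr_RN[measurable]: "(\<lambda>L. incr L j) \<in> borel_measurable (RN N)"
  unfolding incr_def by measurable

lemma measurable_lgrw_dens[measurable]: "(\<lambda>L. lgrw_dens N \<beta> L) \<in> borel_measurable (RN N)"
  unfolding lgrw_dens_def lg_incr_dens_def by measurable

lemma emeasure_space_RN_nonzero: "emeasure (RN N) (space (RN N)) \<noteq> 0"
proof -
  interpret product_sigma_finite "\<lambda>_::nat. lborel :: real measure" by standard
  have "emeasure (RN N) (PiE {1..N} (\<lambda>_. {0..1::real})) = (\<Prod>i\<in>{1..N}. emeasure lborel {0..1::real})"
    unfolding RN_def by (rule emeasure_PiM) auto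
  then have "emeasure (RN N) (PiE {1..N} (\<lambda>_. {0..1::real})) = 1" by simp
  moreover have "emeasure (RN N) (PiE {1..N} (\<lambda>_. {0..1::real})) \<le> emeasure (RN N) (space (RN N))"
    by (rule emeasure_mono[OF _ sets.top]) (auto simp: space_RN)
  ultimately show ?thesis by auto
qed

lemma nn_integral_RN_Suc:
  assumes "f \<in> borel_measurable (RN (Suc N))"
  shows "(\<integral>\<^sup>+L. f L \<partial>RN (Suc N)) = (\<integral>\<^sup>+L. (\<integral>\<^sup>+y. f (L(Suc N := y)) \<partial>lborel) \<partial>RN N)"
proof -
  interpret product_sigma_finite "\<lambda>_::nat. lborel :: real measure" by standard
  have ins: "{1..Suc N} = insert (Suc N) {1..N}" by auto
  show ?thesis
    unfolding RN_def ins
    using product_nn_integral_insert[of "{1..N}" "Suc N" f] assms[unfolded RN_def ins] by simp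
qed

text \<open>The increments are a triangular, volume-preserving change of coordinates.\<close>
lemma nn_integral_RN_prod_incr:
  fixes \<phi> :: "nat \<Rightarrow> real \<Rightarrow> real"
  assumes [measurable]: "\<And>j. \<phi> j \<in> borel_measurable borel"
  shows "(\<integral>\<^sup>+L. (\<Prod>j=1..N. ennreal (\<phi> j (incr L j))) \<partial>RN N) = (\<Prod>j=1..N. \<integral>\<^sup>+y. ennreal (\<phi> j y) \<partial>lborel)"
proof (induction N)
  case 0
  then show ?case by (simp add: RN_def PiM_empty)
next
  case (Suc N)
  have upd: "(\<Prod>j=1..Suc N. ennreal (\<phi> j (incr (L(Suc N := y)) j)))
      = (\<Prod>j=1..N. ennreal (\<phi> j (incr L j))) * ennreal (\<phi> (Suc N) (y - ext0 L N))" for L y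
  proof -
    have "(\<Prod>j=1..N. ennreal (\<phi> j (incr (L(Suc N := y)) j))) = (\<Prod>j=1..N. ennreal (\<phi> j (incr L j)))"
      by (rule prod.cong) (auto simp: incr_def ext0_def)
    then show ?thesis
      by (simp add: incr_def ext0_def)
  qed
  have shift: "(\<integral>\<^sup>+y. c * ennreal (\<phi> (Suc N) (y - e)) \<partial>lborel) = c * (\<integral>\<^sup>+y. ennreal (\<phi> (Suc N) y) \<partial>lborel)" for c e
  proof -
    have "(\<lambda>y. ennreal (\<phi> (Suc N) (y - e))) \<in> borel_measurable borel" by measurable
    then show ?thesis
      using nn_integral_real_affine[of "\<lambda>y. ennreal (\<phi> (Suc N) (y - e))" 1 e] by (simp add: nn_integral_cmult)
  qed
  have "(\<integral>\<^sup>+L. (\<Prod>j=1..Suc N. ennreal (\<phi> j (incr L j))) \<partial>RN (Suc N))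
     = (\<integral>\<^sup>+L. (\<integral>\<^sup>+y. (\<Prod>j=1..N. ennreal (\<phi> j (incr L j))) * ennreal (\<phi> (Suc N) (y - ext0 L N)) \<partial>lborel) \<partial>RN N)"
    by (subst nn_integral_RN_Suc) (simp_all only: upd, measurable)
  also have "\<dots> = (\<integral>\<^sup>+L. (\<Prod>j=1..N. ennreal (\<phi> j (incr L j))) * (\<integral>\<^sup>+y. ennreal (\<phi> (Suc N) y) \<partial>lborel) \<partial>RN N)"
    by (simp only: shift)
  also have "\<dots> = (\<integral>\<^sup>+L. (\<Prod>j=1..N. ennreal (\<phi> j (incr L j))) \<partial>RN N) * (\<integral>\<^sup>+y. ennreal (\<phi> (Suc N) y) \<partial>lborel)"
    by (rule nn_integral_multc) measurable
  also have "\<dots> = (\<Prod>j=1..Suc N. \<integral>\<^sup>+y. ennreal (\<phi> j y) \<partial>lborel)"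
    unfolding Suc.IH by simp
  finally show ?case .
qed

section \<open>Log-gamma and inverse-gamma integrals\<close>

lemma powr_mult_exp_neg_le:
  fixes t \<alpha> :: real assumes "0 < \<alpha>" "0 < t"
  shows "t powr \<alpha> * exp (- t) \<le> \<alpha> powr \<alpha> * exp (- \<alpha>)"
proof -
  have "(t / \<alpha>) powr \<alpha> \<le> exp (t / \<alpha> - 1) powr \<alpha>"
    using assms exp_ge_add_one_self[of "t / \<alpha> - 1"] by (intro powr_mono2) auto
  also have "\<dots> = exp (t - \<alpha>)"
    using assms by (simp add: powr_def field_simps)
  finally have "t powr \<alpha> \<le> \<alpha> powr \<alpha> * exp (t - \<alpha>)"
    using assms by (simp add: powr_divide divide_le_eq mult.commute)
  then have "t powr \<alpha> * exp (- t) \<le> \<alpha> powr \<alpha> * exp (t - \<alpha>) * exp (- t)"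
    by (intro mult_right_mono) auto
  also have "\<dots> = \<alpha> powr \<alpha> * exp (- \<alpha>)"
    by (simp add: mult.assoc flip: exp_add)
  finally show ?thesis .
qed

lemma nn_integral_exp_neg_atLeast0_finite:
  fixes a :: real assumes "0 < a"
  shows "(\<integral>\<^sup>+y. ennreal (exp (- a * y)) * indicator {0..} y \<partial>lborel) < \<infinity>"
proof -
  have "(\<integral>\<^sup>+y. ennreal (exp (- a * y)) * indicator {0..} y \<partial>lborel) = ennreal (0 - (- exp (- a * 0) / a))"
  proof (rule nn_integral_FTC_atLeast)
    show "((\<lambda>y. - exp (- a * y) / a) has_real_derivative exp (- a * y)) (at y)" for y
      using assms by (auto intro!: derivative_eq_intros)
    show "((\<lambda>y. - exp (- a * y) / a) \<longlongrightarrow> 0) at_top"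
      using assms by real_asymp
  qed auto
  then show ?thesis by simp
qed

text \<open>For \<open>y \<ge> 0\<close> drop \<open>e\<^sup>-\<^sup>y\<close>; for \<open>y < 0\<close> write \<open>t = e\<^sup>-\<^sup>y\<close> and bound \<open>t\<^sup>a\<^sup>+\<^sup>1 e\<^sup>-\<^sup>t\<close> by a constant.\<close>
lemma nn_integral_exp_neg_exp_finite:
  fixes a :: real assumes "0 < a"
  shows "(\<integral>\<^sup>+y. ennreal (exp (- a * y - exp (- y))) \<partial>lborel) < \<infinity>"
proof -
  define C where "C = (a + 1) powr (a + 1) * exp (- (a + 1))"
  have "C \<ge> 0" by (simp add: C_def)
  have neg: "exp (- a * y - exp (- y)) \<le> C * exp y" for y
  proof -
    define t where "t = exp (- y)"
    have t: "0 < t" by (simp add: t_def)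
    have "exp (- a * y - exp (- y)) = t powr (a + 1) * exp (- t) / t"
      using t by (simp add: t_def powr_def field_simps flip: exp_add exp_diff)
    also have "\<dots> \<le> C / t"
      unfolding C_def using powr_mult_exp_neg_le[of "a + 1" t] assms t by (intro divide_right_mono) auto
    also have "\<dots> = C * exp y" by (simp add: t_def exp_minus field_simps)
    finally show ?thesis .
  qed
  have "(\<integral>\<^sup>+y. ennreal (exp (- a * y - exp (- y))) \<partial>lborel)
      \<le> (\<integral>\<^sup>+y. ennreal (exp (- a * y)) * indicator {0..} y + ennreal C * (ennreal (exp (- (- y))) * indicator {0..} (- y)) \<partial>lborel)"
  proof (rule nn_integral_mono)
    fix y :: real
    show "ennreal (exp (- a * y - exp (- y))) \<le> ennreal (exp (- a * y)) * indicator {0..} y + ennreal C * (ennreal (exp (- (- y))) * indicator {0..} (- y))"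
    proof (cases "0 \<le> y")
      case True
      then show ?thesis by (simp add: indicator_def add_increasing2)
    next
      case False
      with \<open>C \<ge> 0\<close> show ?thesis using neg[of y]
        by (simp add: indicator_def add_increasing ennreal_mult[symmetric] del: ennreal_mult')
    qed
  qed
  also have "\<dots> = (\<integral>\<^sup>+y. ennreal (exp (- a * y)) * indicator {0..} y \<partial>lborel)
      + ennreal C * (\<integral>\<^sup>+y. ennreal (exp (- (- y))) * indicator {0..} (- y) \<partial>lborel)"
    by (subst nn_integral_add) (auto intro!: nn_integral_cmult)
  also have "(\<integral>\<^sup>+y. ennreal (exp (- (- y))) * indicator {0..} (- y) \<partial>lborel)
      = (\<integral>\<^sup>+y. ennreal (exp (- 1 * y)) * indicator {0..} y \<partial>lborel)"
    using nn_integral_real_affine[of "\<lambda>y. ennreal (exp (- 1 * y)) * indicator {0..} y" "-1" 0] by simp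
  finally show ?thesis
    using nn_integral_exp_neg_atLeast0_finite[OF assms] nn_integral_exp_neg_atLeast0_finite[of 1]
    by (simp add: ennreal_mult_less_top order_le_less_trans)
qed

lemma nn_integral_exp_mult_lg_incr_dens_finite:
  fixes b c :: real assumes "0 < b" "c < b"
  shows "(\<integral>\<^sup>+y. ennreal (exp (c * y) * lg_incr_dens b y) \<partial>lborel) < \<infinity>"
proof -
  have "(\<integral>\<^sup>+y. ennreal (exp (c * y) * lg_incr_dens b y) \<partial>lborel)
      = (\<integral>\<^sup>+y. ennreal (exp (- (b - c) * y - exp (- y))) * ennreal (1 / Gamma b) \<partial>lborel)"
    using Gamma_real_pos[OF assms(1)] by (intro nn_integral_cong)
      (simp add: lg_incr_dens_def ennreal_mult[symmetric] algebra_simps flip: exp_add del: ennreal_mult')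
  also have "\<dots> = (\<integral>\<^sup>+y. ennreal (exp (- (b - c) * y - exp (- y))) \<partial>lborel) * ennreal (1 / Gamma b)"
    by (rule nn_integral_multc) measurable
  also have "\<dots> < \<infinity>"
    using nn_integral_exp_neg_exp_finite[of "b - c"] assms by (simp add: ennreal_mult_less_top)
  finally show ?thesis .
qed

lemma nn_integral_exp_linear_lgrw_finite:
  assumes "\<forall>k\<in>{1..N}. 0 < \<beta> k" and "\<forall>k\<in>{1..N}. c k < \<beta> k"
  shows "(\<integral>\<^sup>+L. ennreal (exp (\<Sum>k=1..N. c k * incr L k) * lgrw_dens N \<beta> L) \<partial>RN N) < \<infinity>"
proof -
  define \<phi> where "\<phi> k y = exp (c k * y) * lg_incr_dens (\<beta> k) y" for k y
  have [measurable]: "\<phi> k \<in> borel_measurable borel" for k unfolding \<phi>_def lg_incr_dens_def by measurable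
  have "(\<integral>\<^sup>+L. ennreal (exp (\<Sum>k=1..N. c k * incr L k) * lgrw_dens N \<beta> L) \<partial>RN N)
      = (\<integral>\<^sup>+L. (\<Prod>j=1..N. ennreal (\<phi> j (incr L j))) \<partial>RN N)"
  proof (rule nn_integral_cong)
    fix L :: "nat \<Rightarrow> real"
    have "exp (\<Sum>k=1..N. c k * incr L k) * lgrw_dens N \<beta> L = (\<Prod>j=1..N. \<phi> j (incr L j))"
      by (simp add: exp_sum lgrw_dens_eq_prod_incr \<phi>_def prod.distrib)
    moreover have "(\<Prod>j=1..N. ennreal (\<phi> j (incr L j))) = ennreal (\<Prod>j=1..N. \<phi> j (incr L j))"
      using assms(1) by (intro prod_ennreal) (auto simp: \<phi>_def intro!: mult_nonneg_nonneg less_imp_le[OF lg_incr_dens_pos])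
    ultimately show "ennreal (exp (\<Sum>k=1..N. c k * incr L k) * lgrw_dens N \<beta> L) = (\<Prod>j=1..N. ennreal (\<phi> j (incr L j)))"
      by simp
  qed
  also have "\<dots> = (\<Prod>j=1..N. \<integral>\<^sup>+y. ennreal (\<phi> j y) \<partial>lborel)"
    by (rule nn_integral_RN_prod_incr) measurable
  also have "\<dots> < \<infinity>"
    using assms nn_integral_exp_mult_lg_incr_dens_finite
    by (auto simp: \<phi>_def less_top[symmetric] ennreal_prod_eq_top)
  finally show ?thesis .
qed

definition invgamma_kernel :: "real \<Rightarrow> real \<Rightarrow> real" where
  "invgamma_kernel \<theta> w = (if 0 < w then w powr (- \<theta> - 1) * exp (- 1 / w) else 0)"

lemma invgamma_kernel_nonneg: "0 \<le> invgamma_kernel \<theta> w"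
  by (simp add: invgamma_kernel_def)

lemma measurable_invgamma_kernel[measurable]: "invgamma_kernel \<theta> \<in> borel_measurable borel"
  unfolding invgamma_kernel_def by measurable

lemma measurable_invgamma_dens[measurable]: "invgamma_dens \<theta> \<in> borel_measurable borel"
  unfolding invgamma_dens_def by measurable

lemma invgamma_dens_eq_rGamma_mult_kernel: "invgamma_dens \<theta> w = rGamma \<theta> * invgamma_kernel \<theta> w"
  by (simp add: invgamma_dens_def invgamma_kernel_def rGamma_inverse_Gamma divide_inverse mult_ac)

lemma invgamma_kernel_add:
  "invgamma_kernel (b + u) w = invgamma_kernel b w * exp (- u * ln w)"
proof (cases "0 < w")
  case True
  have "w powr (- (b + u) - 1) = w powr (- b - 1) * w powr (- u)"
    by (simp add: powr_add[symmetric] algebra_simps)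
  also have "w powr (- u) = exp (- u * ln w)" using True by (simp add: powr_def)
  finally show ?thesis using True by (simp add: invgamma_kernel_def mult_ac)
qed (simp add: invgamma_kernel_def)

lemma powr_neg_minus_one_eq:
  fixes w :: real assumes "0 < w"
  shows "w powr (- \<theta> - 1) = (1 / w) powr (\<theta> + 1)"
proof -
  have "(1 / w) powr (\<theta> + 1) = 1 powr (\<theta> + 1) / w powr (\<theta> + 1)"
    by (rule powr_divide)
  also have "\<dots> = inverse (w powr (\<theta> + 1))"
    by (simp add: divide_inverse)
  also have "\<dots> = w powr (- \<theta> - 1)"
    by (simp add: powr_minus[symmetric])
  finally show ?thesis ..
qed

lemma invgamma_kernel_eq: "0 < w \<Longrightarrow> invgamma_kernel \<theta> w = (1 / w) powr (\<theta> + 1) * exp (- (1 / w))"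
  by (simp add: invgamma_kernel_def powr_neg_minus_one_eq)

text \<open>The kernel is bounded near \<open>0\<close> and at most \<open>w\<^sup>-\<^sup>\<theta>\<^sup>-\<^sup>1\<close> at infinity.\<close>
lemma nn_integral_invgamma_kernel_finite:
  fixes \<theta> :: real assumes "0 < \<theta>"
  shows "(\<integral>\<^sup>+w. ennreal (invgamma_kernel \<theta> w) \<partial>lborel) < \<infinity>"
proof -
  define C where "C = (\<theta> + 1) powr (\<theta> + 1) * exp (- (\<theta> + 1))"
  have near0: "invgamma_kernel \<theta> w \<le> C" if "0 < w" for w
    unfolding C_def invgamma_kernel_eq[OF that] using that assms by (intro powr_mult_exp_neg_le) auto
  have tail: "invgamma_kernel \<theta> w \<le> w powr (- \<theta> - 1)" if "0 < w" for w
    using that by (simp add: invgamma_kernel_def mult_left_le)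
  have "(\<integral>\<^sup>+w. ennreal (invgamma_kernel \<theta> w) \<partial>lborel)
     \<le> (\<integral>\<^sup>+w. ennreal C * indicator {0..1} w + ennreal (w powr (- \<theta> - 1)) * indicator {1..} w \<partial>lborel)"
  proof (rule nn_integral_mono)
    fix w :: real
    consider "w \<le> 0" | "0 < w" "w \<le> 1" | "1 < w" by linarith
    then show "ennreal (invgamma_kernel \<theta> w) \<le> ennreal C * indicator {0..1} w + ennreal (w powr (- \<theta> - 1)) * indicator {1..} w"
    proof cases
      case 1
      then show ?thesis by (simp add: invgamma_kernel_def)
    next
      case 2
      then show ?thesis using near0[of w] by (auto simp: indicator_def intro: add_increasing2 ennreal_leI)
    next
      case 3
      then show ?thesis using tail[of w] by (simp add: indicator_def add_increasing ennreal_leI)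
    qed
  qed
  also have "\<dots> = (\<integral>\<^sup>+w. ennreal C * indicator {0..1::real} w \<partial>lborel) + (\<integral>\<^sup>+w. ennreal (w powr (- \<theta> - 1)) * indicator {1..} w \<partial>lborel)"
    by (rule nn_integral_add) measurable
  also have "(\<integral>\<^sup>+w. ennreal C * indicator {0..1::real} w \<partial>lborel) = ennreal C"
    by (simp add: nn_integral_cmult_indicator)
  also have "(\<integral>\<^sup>+w. ennreal (w powr (- \<theta> - 1)) * indicator {1..} w \<partial>lborel) = ennreal (0 - (- (1 powr (- \<theta>)) / \<theta>))"
  proof (rule nn_integral_FTC_atLeast)
    show "((\<lambda>w. - (w powr (- \<theta>)) / \<theta>) has_real_derivative w powr (- \<theta> - 1)) (at w)" if "1 \<le> w" for w
      using that assms by (auto intro!: derivative_eq_intros simp: powr_diff)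
    show "((\<lambda>w. - (w powr (- \<theta>)) / \<theta>) \<longlongrightarrow> 0) at_top"
      using assms by real_asymp
  qed auto
  finally show ?thesis
    by (simp add: ennreal_mult_less_top order_le_less_trans)
qed

lemma invgamma_dens_mult_le:
  fixes \<theta> x :: real assumes "0 < \<theta>"
  shows "0 \<le> invgamma_dens \<theta> x * x" "invgamma_dens \<theta> x * x \<le> \<theta> powr \<theta> * exp (- \<theta>) / Gamma \<theta>"
proof -
  have G: "0 < Gamma \<theta>" using assms by (simp add: Gamma_real_pos)
  show "0 \<le> invgamma_dens \<theta> x * x" using G by (simp add: invgamma_dens_def)
  show "invgamma_dens \<theta> x * x \<le> \<theta> powr \<theta> * exp (- \<theta>) / Gamma \<theta>"
  proof (cases "0 < x")
    case True
    have "(1 / x) powr (\<theta> + 1) * x = (1 / x) powr \<theta>"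
      using True by (simp add: powr_add)
    then have "invgamma_dens \<theta> x * x = (1 / x) powr \<theta> * exp (- (1 / x)) / Gamma \<theta>"
      using True by (simp add: invgamma_dens_def powr_neg_minus_one_eq mult_ac)
    also have "\<dots> \<le> \<theta> powr \<theta> * exp (- \<theta>) / Gamma \<theta>"
      using G True assms by (intro divide_right_mono powr_mult_exp_neg_le) auto
    finally show ?thesis .
  qed (use G in \<open>simp add: invgamma_dens_def\<close>)
qed

section \<open>Domination of V\<close>

definition Vsum :: "nat \<Rightarrow> (nat \<Rightarrow> real) \<Rightarrow> (nat \<Rightarrow> real) \<Rightarrow> real" where
  "Vsum N L1 L2 = (\<Sum>j=1..N. exp (ext0 L2 j - ext0 L1 (j - 1)))"

lemma Vsum_pos: "1 \<le> N \<Longrightarrow> 0 < Vsum N L1 L2"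
  unfolding Vsum_def by (intro sum_pos) auto

lemma Vsum_ge_term: "j \<in> {1..N} \<Longrightarrow> exp (ext0 L2 j - ext0 L1 (j - 1)) \<le> Vsum N L1 L2"
  unfolding Vsum_def by (rule member_le_sum) auto

lemma measurable_Vsum[measurable]:
  assumes [measurable]: "f \<in> M \<rightarrow>\<^sub>M RN N" "g \<in> M \<rightarrow>\<^sub>M RN N"
  shows "(\<lambda>x. Vsum N (f x) (g x)) \<in> borel_measurable M"
  unfolding Vsum_def by measurable

lemma Vfun_eq_Vsum: "Vfun N u v L1 L2 = Vsum N L1 L2 powr (- (u + v)) * exp (- v * (ext0 L1 N - ext0 L2 N))"
  by (simp add: Vfun_def Vsum_def)

lemma measurable_Vfun[measurable]:
  assumes [measurable]: "f \<in> M \<rightarrow>\<^sub>M RN N" "g \<in> M \<rightarrow>\<^sub>M RN N"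
  shows "(\<lambda>x. Vfun N u v (f x) (g x)) \<in> borel_measurable M"
  unfolding Vfun_eq_Vsum by measurable

lemma Vfun_pos: "1 \<le> N \<Longrightarrow> 0 < Vfun N u v L1 L2"
  unfolding Vfun_eq_Vsum using Vsum_pos[of N L1 L2] by simp

lemma Vfun_eq_Vfun0_mult_exp:
  "1 \<le> N \<Longrightarrow> Vfun N u v L1 L2 = Vfun N 0 v L1 L2 * exp (- u * ln (Vsum N L1 L2))"
  unfolding Vfun_eq_Vsum using Vsum_pos[of N L1 L2]
  by (simp add: powr_def algebra_simps flip: exp_add)

lemma sum_step_mult_incr:
  assumes "j \<le> N"
  shows "(\<Sum>k=1..N. (if k \<le> j then a else b) * incr L k) = a * ext0 L j + b * (ext0 L N - ext0 L j)"
proof -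
  have "(\<Sum>k=1..N. (if k \<le> j then a else b) * incr L k)
      = (\<Sum>k=1..N. b * incr L k) + (\<Sum>k\<in>{1..N} \<inter> {..j}. (a - b) * incr L k)"
    unfolding sum.inter_restrict[OF finite_atLeastAtMost] sum.distrib[symmetric]
    by (rule sum.cong) (auto simp: algebra_simps)
  also have "{1..N} \<inter> {..j} = {1..j}" using assms by auto
  also have "(\<Sum>k\<in>{1..j}. (a - b) * incr L k) = (a - b) * ext0 L j"
    by (simp only: ext0_eq_sum_incr[of L j] sum_distrib_left)
  also have "(\<Sum>k=1..N. b * incr L k) = b * ext0 L N"
    by (simp only: ext0_eq_sum_incr[of L N] sum_distrib_left)
  finally show ?thesis by (simp add: algebra_simps)
qed

lemma Vsum_powr_neg_le:
  assumes "1 \<le> N" "0 \<le> q" "q \<le> p"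
  shows "Vsum N L1 L2 powr (- p) \<le> exp (- (p - q) * ext0 L2 1 - q * (ext0 L2 N - ext0 L1 (N - 1)))"
proof -
  have "Vsum N L1 L2 powr (- p) = Vsum N L1 L2 powr (- (p - q)) * Vsum N L1 L2 powr (- q)"
    by (simp add: powr_add[symmetric])
  also have "\<dots> \<le> exp (ext0 L2 1) powr (- (p - q)) * exp (ext0 L2 N - ext0 L1 (N - 1)) powr (- q)"
    using assms Vsum_ge_term[of 1 N L2 L1] Vsum_ge_term[of N N L2 L1]
    by (intro mult_mono powr_mono2') (auto simp: ext0_def)
  also have "\<dots> = exp (- (p - q) * ext0 L2 1 - q * (ext0 L2 N - ext0 L1 (N - 1)))"
    by (simp add: powr_def exp_add[symmetric] algebra_simps)
  finally show ?thesis .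
qed

lemma Vsum_powr_le_sum:
  assumes "1 \<le> N" "0 \<le> r"
  shows "Vsum N L1 L2 powr r \<le> real N powr r * (\<Sum>j=1..N. exp (r * (ext0 L2 j - ext0 L1 (j - 1))))"
proof -
  define T where "T j = exp (ext0 L2 j - ext0 L1 (j - 1))" for j
  have "Max (T ` {1..N}) \<in> T ` {1..N}" using assms(1) by (intro Max_in) auto
  then obtain j0 where j0: "j0 \<in> {1..N}" "T j0 = Max (T ` {1..N})" by auto
  have "T j \<le> T j0" if "j \<in> {1..N}" for j
    using that unfolding j0(2) by (intro Max_ge) auto
  then have "Vsum N L1 L2 \<le> real N * T j0"
    using sum_mono[of "{1..N}" T "\<lambda>_. T j0"] by (simp add: Vsum_def T_def)
  then have "Vsum N L1 L2 powr r \<le> (real N * T j0) powr r"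
    using Vsum_pos[OF assms(1), of L1 L2] assms(2) by (intro powr_mono2) auto
  also have "\<dots> = real N powr r * T j0 powr r"
    by (simp add: powr_mult T_def)
  also have "\<dots> \<le> real N powr r * (\<Sum>j=1..N. T j powr r)"
    using j0 by (intro mult_left_mono member_le_sum) auto
  finally show ?thesis by (simp add: T_def powr_def)
qed

definition exp_linear_majorant ::
    "nat \<Rightarrow> (nat \<Rightarrow> real) \<Rightarrow> ((nat \<Rightarrow> real) \<Rightarrow> (nat \<Rightarrow> real) \<Rightarrow> real) \<Rightarrow> bool" where
  "exp_linear_majorant N \<beta> f \<longleftrightarrow> (\<exists>I K cx cy. finite (I :: nat set) \<and> (\<forall>i\<in>I. 0 \<le> K i) \<and>
     (\<forall>i\<in>I. \<forall>k\<in>{1..N}. cx i k < \<beta> k \<and> cy i k < \<beta> k) \<and>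
     (\<forall>L1 L2. f L1 L2 \<le> (\<Sum>i\<in>I. K i * exp (\<Sum>k=1..N. cx i k * incr L1 k) * exp (\<Sum>k=1..N. cy i k * incr L2 k))))"

lemma nn_integral_sum_prod_finite:
  fixes F G :: "'i \<Rightarrow> 'a \<Rightarrow> ennreal"
  assumes I: "finite I"
    and [measurable]: "\<And>i. F i \<in> borel_measurable M" "\<And>i. G i \<in> borel_measurable M"
    and Ffin: "\<And>i. i \<in> I \<Longrightarrow> (\<integral>\<^sup>+x. F i x \<partial>M) < \<infinity>" and Gfin: "\<And>i. i \<in> I \<Longrightarrow> (\<integral>\<^sup>+y. G i y \<partial>M) < \<infinity>"
    and K: "\<And>i. i \<in> I \<Longrightarrow> K i < \<infinity>"
  shows "(\<integral>\<^sup>+x. (\<integral>\<^sup>+y. (\<Sum>i\<in>I. K i * F i x * G i y) \<partial>M) \<partial>M) < \<infinity>"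
    and "(\<And>i. i \<in> I \<Longrightarrow> F i x < \<infinity>) \<Longrightarrow> (\<integral>\<^sup>+y. (\<Sum>i\<in>I. K i * F i x * G i y) \<partial>M) < \<infinity>"
proof -
  have inner: "(\<integral>\<^sup>+y. (\<Sum>i\<in>I. K i * F i x * G i y) \<partial>M) = (\<Sum>i\<in>I. K i * F i x * (\<integral>\<^sup>+y. G i y \<partial>M))" for x
  proof -
    have "(\<integral>\<^sup>+y. (\<Sum>i\<in>I. K i * F i x * G i y) \<partial>M) = (\<Sum>i\<in>I. \<integral>\<^sup>+y. K i * F i x * G i y \<partial>M)"
      by (rule nn_integral_sum) measurable
    also have "\<dots> = (\<Sum>i\<in>I. K i * F i x * (\<integral>\<^sup>+y. G i y \<partial>M))"
      by (intro sum.cong refl nn_integral_cmult) measurable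
    finally show ?thesis .
  qed
  show "(\<And>i. i \<in> I \<Longrightarrow> F i x < \<infinity>) \<Longrightarrow> (\<integral>\<^sup>+y. (\<Sum>i\<in>I. K i * F i x * G i y) \<partial>M) < \<infinity>"
    unfolding inner using I K Gfin by (simp add: ennreal_mult_less_top)
  have "(\<integral>\<^sup>+x. (\<Sum>i\<in>I. K i * F i x * (\<integral>\<^sup>+y. G i y \<partial>M)) \<partial>M)
      = (\<Sum>i\<in>I. \<integral>\<^sup>+x. K i * (\<integral>\<^sup>+y. G i y \<partial>M) * F i x \<partial>M)"
    by (subst nn_integral_sum) (simp_all add: mult_ac)
  also have "\<dots> = (\<Sum>i\<in>I. K i * (\<integral>\<^sup>+y. G i y \<partial>M) * (\<integral>\<^sup>+x. F i x \<partial>M))"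
    by (intro sum.cong refl nn_integral_cmult) measurable
  also have "\<dots> < \<infinity>"
    using I K Ffin Gfin by (simp add: ennreal_mult_less_top)
  finally show "(\<integral>\<^sup>+x. (\<integral>\<^sup>+y. (\<Sum>i\<in>I. K i * F i x * G i y) \<partial>M) \<partial>M) < \<infinity>"
    unfolding inner .
qed

lemma nn_integral_lgrw_pair_finite:
  assumes pos: "\<forall>k\<in>{1..N}. 0 < \<beta> k" and "exp_linear_majorant N \<beta> f"
  shows "(\<integral>\<^sup>+L1. (\<integral>\<^sup>+L2. ennreal (f L1 L2 * lgrw_dens N \<beta> L1 * lgrw_dens N \<beta> L2) \<partial>RN N) \<partial>RN N) < \<infinity>"
    and "(\<integral>\<^sup>+L2. ennreal (f L1 L2 * lgrw_dens N \<beta> L1 * lgrw_dens N \<beta> L2) \<partial>RN N) < \<infinity>"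
proof -
  obtain I :: "nat set" and K cx cy where I: "finite I" and K: "\<forall>i\<in>I. 0 \<le> K i"
    and c: "\<forall>i\<in>I. \<forall>k\<in>{1..N}. cx i k < \<beta> k \<and> cy i k < \<beta> k"
    and f: "\<forall>L1 L2. f L1 L2 \<le> (\<Sum>i\<in>I. K i * exp (\<Sum>k=1..N. cx i k * incr L1 k) * exp (\<Sum>k=1..N. cy i k * incr L2 k))"
    using assms(2) unfolding exp_linear_majorant_def by (elim exE conjE) (rule that; assumption)
  define F where "F i L = exp (\<Sum>k=1..N. cx i k * incr L k) * lgrw_dens N \<beta> L" for i L
  define G where "G i L = exp (\<Sum>k=1..N. cy i k * incr L k) * lgrw_dens N \<beta> L" for i L
  have l0: "0 \<le> lgrw_dens N \<beta> L" for L using lgrw_dens_pos[OF pos] less_imp_le by blast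
  have pw: "ennreal (f L1 L2 * lgrw_dens N \<beta> L1 * lgrw_dens N \<beta> L2)
      \<le> (\<Sum>i\<in>I. ennreal (K i) * ennreal (F i L1) * ennreal (G i L2))" for L1 L2
  proof -
    have "f L1 L2 * lgrw_dens N \<beta> L1 * lgrw_dens N \<beta> L2
        \<le> (\<Sum>i\<in>I. K i * exp (\<Sum>k=1..N. cx i k * incr L1 k) * exp (\<Sum>k=1..N. cy i k * incr L2 k)) * lgrw_dens N \<beta> L1 * lgrw_dens N \<beta> L2"
      using f l0 by (intro mult_right_mono) simp_all
    also have "\<dots> = (\<Sum>i\<in>I. K i * F i L1 * G i L2)"
      unfolding sum_distrib_right by (rule sum.cong[OF refl]) (simp add: F_def G_def mult_ac)
    finally have "ennreal (f L1 L2 * lgrw_dens N \<beta> L1 * lgrw_dens N \<beta> L2) \<le> ennreal (\<Sum>i\<in>I. K i * F i L1 * G i L2)"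
      by (rule ennreal_leI)
    also have "\<dots> = (\<Sum>i\<in>I. ennreal (K i) * ennreal (F i L1) * ennreal (G i L2))"
      using K l0 by (simp add: F_def G_def ennreal_mult' sum_ennreal[symmetric] del: sum_ennreal)
    finally show ?thesis .
  qed
  note sum_fin = nn_integral_sum_prod_finite[OF I, where F = "\<lambda>i L. ennreal (F i L)" and G = "\<lambda>i L. ennreal (G i L)"
      and K = "\<lambda>i. ennreal (K i)"]
  have meas: "(\<lambda>L. ennreal (F i L)) \<in> borel_measurable (RN N)" "(\<lambda>L. ennreal (G i L)) \<in> borel_measurable (RN N)" for i
    unfolding F_def G_def by measurable
  have fin: "(\<integral>\<^sup>+L. ennreal (F i L) \<partial>RN N) < \<infinity>" "(\<integral>\<^sup>+L. ennreal (G i L) \<partial>RN N) < \<infinity>" if "i \<in> I" for i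
    unfolding F_def G_def by (rule nn_integral_exp_linear_lgrw_finite[OF pos]; use c that in auto)+
  show "(\<integral>\<^sup>+L1. (\<integral>\<^sup>+L2. ennreal (f L1 L2 * lgrw_dens N \<beta> L1 * lgrw_dens N \<beta> L2) \<partial>RN N) \<partial>RN N) < \<infinity>"
    by (rule order_le_less_trans[OF _ sum_fin(1)[OF meas fin]]) (auto intro!: nn_integral_mono pw)
  show "(\<integral>\<^sup>+L2. ennreal (f L1 L2 * lgrw_dens N \<beta> L1 * lgrw_dens N \<beta> L2) \<partial>RN N) < \<infinity>"
    by (rule order_le_less_trans[OF _ sum_fin(2)[OF meas fin]]) (auto intro!: nn_integral_mono pw)
qed

section \<open>The stationary measure and the transition kernel\<close>

definition statLG_weight :: "nat \<Rightarrow> (nat \<Rightarrow> real) \<Rightarrow> real \<Rightarrow> real \<Rightarrow> (nat \<Rightarrow> real) \<times> (nat \<Rightarrow> real) \<Rightarrow> real" where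
  "statLG_weight N \<beta> u v z = Vfun N u v (fst z) (snd z) * lgrw_dens N \<beta> (fst z) * lgrw_dens N \<beta> (snd z)"

lemma measurable_statLG_weight[measurable]:
  assumes [measurable]: "f \<in> M \<rightarrow>\<^sub>M RN N \<Otimes>\<^sub>M RN N"
  shows "(\<lambda>x. statLG_weight N \<beta> u v (f x)) \<in> borel_measurable M"
  unfolding statLG_weight_def by measurable

lemma statLG_weight_eq_exp_ln_Vsum:
  "1 \<le> N \<Longrightarrow> statLG_weight N \<beta> 0 v z * exp (- u * ln (Vsum N (fst z) (snd z))) = statLG_weight N \<beta> u v z"
  unfolding statLG_weight_def by (subst (2) Vfun_eq_Vfun0_mult_exp) (simp_all add: mult_ac)

lemma measurable_statLG_weight_snd[measurable]:
  "(\<lambda>L2. statLG_weight N \<beta> u v (L1, L2)) \<in> borel_measurable (RN N)"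
  unfolding statLG_weight_def Vfun_eq_Vsum Vsum_def fst_conv snd_conv by measurable

lemma statLG_marg_eq: "statLG_marg N \<beta> u v L1 = (\<integral>L2. statLG_weight N \<beta> u v (L1, L2) \<partial>RN N) / statLG_norm N \<beta> u v"
  by (simp add: statLG_marg_def statLG_weight_def)

lemma statLG_norm_eq: "statLG_norm N \<beta> u v = (\<integral>L1. (\<integral>L2. statLG_weight N \<beta> u v (L1, L2) \<partial>RN N) \<partial>RN N)"
  by (simp add: statLG_norm_def statLG_weight_def)

definition U_cond :: "nat \<Rightarrow> (nat \<Rightarrow> real) \<Rightarrow> real \<Rightarrow> (nat \<Rightarrow> real) \<Rightarrow> real \<Rightarrow> (nat \<Rightarrow> real) \<Rightarrow> real" where
  "U_cond N \<beta> v L' w L = (\<Prod>j=1..N. invgamma_dens (U_theta N \<beta> v j) (exp (L' j) / U_c N L' L w j)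
                                     * (exp (L' j) / U_c N L' L w j))"

definition U_cond_bound :: "nat \<Rightarrow> (nat \<Rightarrow> real) \<Rightarrow> real \<Rightarrow> real" where
  "U_cond_bound N \<beta> v = (\<Prod>j=1..N. U_theta N \<beta> v j powr U_theta N \<beta> v j * exp (- U_theta N \<beta> v j) / Gamma (U_theta N \<beta> v j))"

lemma U_trans_eq:
  "U_trans N \<beta> u v L' L = rGamma (\<beta> 1 + u) * (\<integral>w. invgamma_kernel (\<beta> 1 + u) w * U_cond N \<beta> v L' w L \<partial>lborel)"
  unfolding U_trans_def U_cond_def invgamma_dens_eq_rGamma_mult_kernel
  by (simp only: mult.assoc integral_mult_right_zero)

lemma U_c_eq_ext0:
  "U_c N L' L w j = (if j < N then exp (ext0 L' (j - 1)) + exp (ext0 L (j + 1)) / (w * exp (ext0 L 1))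
                     else exp (ext0 L' (j - 1)))"
  by (simp add: U_c_def ext0_def)

lemma measurable_U_cond[measurable]:
  assumes [measurable]: "f \<in> M \<rightarrow>\<^sub>M RN N" "g \<in> borel_measurable M"
  shows "(\<lambda>x. U_cond N \<beta> v L' (g x) (f x)) \<in> borel_measurable M"
  unfolding U_cond_def U_c_eq_ext0 by measurable

text \<open>The integrand of \<open>\<integral> U(L'|L) P(L) dL\<close> after unfolding \<open>U\<close> and \<open>P\<close>, up to the
  factor \<open>1 / (\<Gamma>(\<beta>\<^sub>1 + u) Z)\<close>, at \<open>z = (L, w, L\<^sub>2)\<close>.\<close>
definition U_integrand ::
    "nat \<Rightarrow> (nat \<Rightarrow> real) \<Rightarrow> real \<Rightarrow> (nat \<Rightarrow> real) \<Rightarrow> real \<Rightarrow> (nat \<Rightarrow> real) \<times> real \<times> (nat \<Rightarrow> real) \<Rightarrow> real" where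
  "U_integrand N \<beta> v L' u z = invgamma_kernel (\<beta> 1 + u) (fst (snd z)) * U_cond N \<beta> v L' (fst (snd z)) (fst z)
     * statLG_weight N \<beta> u v (fst z, snd (snd z))"

lemma measurable_U_integrand[measurable]:
  "U_integrand N \<beta> v L' u \<in> borel_measurable (RN N \<Otimes>\<^sub>M (lborel \<Otimes>\<^sub>M RN N))"
  unfolding U_integrand_def by measurable

lemma measurable_U_integrand_slice[measurable]:
  "(\<lambda>p. U_integrand N \<beta> v L' u (L, p)) \<in> borel_measurable (lborel \<Otimes>\<^sub>M RN N)"
proof -
  have [measurable]: "(\<lambda>w. U_cond N \<beta> v L' w L) \<in> borel_measurable borel"
    unfolding U_cond_def U_c_def by measurable
  show ?thesis
    unfolding U_integrand_def fst_conv snd_conv statLG_weight_def Vfun_eq_Vsum Vsum_def by measurable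
qed

lemma integral_U_trans_statLG_marg_eq:
  "(\<integral>L. U_trans N \<beta> u v L' L * statLG_marg N \<beta> u v L \<partial>RN N)
   = rGamma (\<beta> 1 + u) / statLG_norm N \<beta> u v
     * (\<integral>L. (\<integral>w. (\<integral>L2. U_integrand N \<beta> v L' u (L, w, L2) \<partial>RN N) \<partial>lborel) \<partial>RN N)"
proof -
  have "U_trans N \<beta> u v L' L * statLG_marg N \<beta> u v L
      = rGamma (\<beta> 1 + u) / statLG_norm N \<beta> u v * (\<integral>w. (\<integral>L2. U_integrand N \<beta> v L' u (L, w, L2) \<partial>RN N) \<partial>lborel)" for L
  proof -
    define I where "I = (\<integral>w. invgamma_kernel (\<beta> 1 + u) w * U_cond N \<beta> v L' w L \<partial>lborel)"
    define A where "A = (\<integral>L2. statLG_weight N \<beta> u v (L, L2) \<partial>RN N)"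
    have "U_trans N \<beta> u v L' L * statLG_marg N \<beta> u v L = rGamma (\<beta> 1 + u) / statLG_norm N \<beta> u v * (I * A)"
      unfolding U_trans_eq statLG_marg_eq I_def[symmetric] A_def[symmetric] by simp
    also have "I * A = (\<integral>w. invgamma_kernel (\<beta> 1 + u) w * U_cond N \<beta> v L' w L * A \<partial>lborel)"
      unfolding I_def by (rule integral_mult_left_zero[symmetric])
    also have "\<dots> = (\<integral>w. (\<integral>L2. U_integrand N \<beta> v L' u (L, w, L2) \<partial>RN N) \<partial>lborel)"
      unfolding A_def U_integrand_def fst_conv snd_conv by (simp only: integral_mult_right_zero)
    finally show ?thesis .
  qed
  then show ?thesis
    by (simp only: integral_mult_right_zero)
qed

lemma U_integrand_eq_exp:
  assumes "1 \<le> N"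
  shows "U_integrand N \<beta> v L' u z
    = U_integrand N \<beta> v L' 0 z * exp (- u * (ln (fst (snd z)) + ln (Vsum N (fst z) (snd (snd z)))))"
proof -
  have k: "invgamma_kernel (\<beta> 1 + u) w = invgamma_kernel (\<beta> 1 + 0) w * exp (- u * ln w)" for w
    using invgamma_kernel_add[of "\<beta> 1" u w] by simp
  have s: "statLG_weight N \<beta> u v p = statLG_weight N \<beta> 0 v p * exp (- u * ln (Vsum N (fst p) (snd p)))" for p
    using statLG_weight_eq_exp_ln_Vsum[OF assms, where z = p and u = u] by simp
  have e: "exp (- u * (a + b)) = exp (- u * a) * exp (- u * b)" for a b :: real
    by (simp add: algebra_simps flip: exp_add)
  show ?thesis
    unfolding U_integrand_def k s e fst_conv snd_conv by (simp only: mult_ac)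
qed

locale statLG_params =
  fixes N :: nat and \<beta> :: "nat \<Rightarrow> real" and v :: real
  assumes N_ge_1: "1 \<le> N"
    and beta_pos: "\<forall>k\<in>{1..N}. 0 < \<beta> k"
    and beta_plus_v_pos: "\<forall>k\<in>{1..N}. 0 < \<beta> k + v"
begin

lemma beta_plus_pos_iff: "(\<forall>k\<in>{1..N}. 0 < \<beta> k + u) \<longleftrightarrow> - Min (\<beta> ` {1..N}) < u"
proof
  assume "\<forall>k\<in>{1..N}. 0 < \<beta> k + u"
  moreover have "Min (\<beta> ` {1..N}) \<in> \<beta> ` {1..N}" using N_ge_1 by (intro Min_in) auto
  ultimately show "- Min (\<beta> ` {1..N}) < u" by auto
next
  assume u: "- Min (\<beta> ` {1..N}) < u"
  show "\<forall>k\<in>{1..N}. 0 < \<beta> k + u"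
  proof
    fix k assume "k \<in> {1..N}"
    then have "Min (\<beta> ` {1..N}) \<le> \<beta> k" by (intro Min_le) auto
    with u show "0 < \<beta> k + u" by linarith
  qed
qed

text \<open>The split \<open>u + v = (u + v - q) + q\<close> of the exponent of \<open>S\<close> with \<open>q = max 0 (min (u + v) v)\<close>
  is the one that keeps both coefficient vectors below \<open>\<beta>\<close>.\<close>
lemma exp_linear_majorant_Vfun_nonneg:
  assumes uu: "\<forall>k\<in>{1..N}. 0 < \<beta> k + u" and p: "0 \<le> u + v"
  shows "exp_linear_majorant N \<beta> (Vfun N u v)"
proof -
  define p where "p = u + v"
  define q where "q = max 0 (min p v)"
  have q: "0 \<le> q" "q \<le> p" using p by (auto simp: q_def p_def)
  define cx where "cx (k::nat) = (if k \<le> N - 1 then q - v else - v)" for k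
  define cy where "cy (k::nat) = (if k \<le> 1 then - u else v - q)" for k
  have coeffs: "cx k < \<beta> k \<and> cy k < \<beta> k" if "k \<in> {1..N}" for k
  proof -
    have "0 < \<beta> k" "0 < \<beta> k + u" "0 < \<beta> k + v" using beta_pos beta_plus_v_pos uu that by auto
    then show ?thesis unfolding cx_def cy_def q_def p_def by (auto simp: max_def min_def)
  qed
  have bound: "Vfun N u v L1 L2 \<le> exp (\<Sum>k=1..N. cx k * incr L1 k) * exp (\<Sum>k=1..N. cy k * incr L2 k)" for L1 L2
  proof -
    define S where "S = Vsum N L1 L2"
    have Sp: "S powr (- p) \<le> exp (- (p - q) * ext0 L2 1 - q * (ext0 L2 N - ext0 L1 (N - 1)))"
      unfolding S_def using N_ge_1 q by (rule Vsum_powr_neg_le)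
    have "Vfun N u v L1 L2 = S powr (- p) * exp (- v * (ext0 L1 N - ext0 L2 N))"
      by (simp add: Vfun_eq_Vsum S_def p_def)
    also have "\<dots> \<le> exp (- (p - q) * ext0 L2 1 - q * (ext0 L2 N - ext0 L1 (N - 1))) * exp (- v * (ext0 L1 N - ext0 L2 N))"
      by (intro mult_right_mono Sp) simp
    also have "\<dots> = exp ((\<Sum>k=1..N. cx k * incr L1 k) + (\<Sum>k=1..N. cy k * incr L2 k))"
    proof -
      have "(\<Sum>k=1..N. cx k * incr L1 k) = (q - v) * ext0 L1 (N - 1) + (- v) * (ext0 L1 N - ext0 L1 (N - 1))"
        unfolding cx_def by (rule sum_step_mult_incr) simp
      moreover have "(\<Sum>k=1..N. cy k * incr L2 k) = (- u) * ext0 L2 1 + (v - q) * (ext0 L2 N - ext0 L2 1)"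
        unfolding cy_def by (rule sum_step_mult_incr) (use N_ge_1 in simp)
      ultimately show ?thesis
        by (simp add: p_def algebra_simps flip: exp_add)
    qed
    finally show ?thesis by (simp add: exp_add)
  qed
  show ?thesis
    unfolding exp_linear_majorant_def
    using coeffs bound by (intro exI[of _ "{0}"] exI[of _ "\<lambda>_. 1"] exI[of _ "\<lambda>_. cx"] exI[of _ "\<lambda>_. cy"]) auto
qed

lemma exp_linear_majorant_Vfun_neg:
  assumes uu: "\<forall>k\<in>{1..N}. 0 < \<beta> k + u" and r: "u + v < 0"
  shows "exp_linear_majorant N \<beta> (Vfun N u v)"
proof -
  define r where "r = - (u + v)"
  define cx where "cx (j::nat) (k::nat) = (if k \<le> j - 1 then u else - v)" for j k
  define cy where "cy (j::nat) (k::nat) = (if k \<le> j then - u else v)" for j k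
  have coeffs: "cx j k < \<beta> k \<and> cy j k < \<beta> k" if "k \<in> {1..N}" for j k
  proof -
    have "0 < \<beta> k" "0 < \<beta> k + u" "0 < \<beta> k + v" using beta_pos beta_plus_v_pos uu that by auto
    then show ?thesis using r unfolding cx_def cy_def by auto
  qed
  have bound: "Vfun N u v L1 L2 \<le> (\<Sum>j\<in>{1..N}. real N powr r * exp (\<Sum>k=1..N. cx j k * incr L1 k) * exp (\<Sum>k=1..N. cy j k * incr L2 k))" for L1 L2
  proof -
    define S where "S = Vsum N L1 L2"
    define T where "T j = exp (ext0 L2 j - ext0 L1 (j - 1))" for j
    have Sr: "S powr r \<le> real N powr r * (\<Sum>j=1..N. T j powr r)"
      using Vsum_powr_le_sum[OF N_ge_1, of r L1 L2] r by (simp add: S_def T_def r_def powr_def)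
    have "Vfun N u v L1 L2 = S powr r * exp (- v * (ext0 L1 N - ext0 L2 N))"
      by (simp add: Vfun_eq_Vsum S_def r_def)
    also have "\<dots> \<le> real N powr r * (\<Sum>j=1..N. T j powr r) * exp (- v * (ext0 L1 N - ext0 L2 N))"
      by (intro mult_right_mono Sr) simp
    also have "\<dots> = (\<Sum>j=1..N. real N powr r * (T j powr r * exp (- v * (ext0 L1 N - ext0 L2 N))))"
      by (simp add: sum_distrib_left sum_distrib_right mult.assoc)
    also have "\<dots> = (\<Sum>j=1..N. real N powr r * exp (\<Sum>k=1..N. cx j k * incr L1 k) * exp (\<Sum>k=1..N. cy j k * incr L2 k))"
    proof (rule sum.cong[OF refl])
      fix j assume j: "j \<in> {1..N}"
      have "r * (ext0 L2 j - ext0 L1 (j - 1)) - v * (ext0 L1 N - ext0 L2 N)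
          = (\<Sum>k=1..N. cx j k * incr L1 k) + (\<Sum>k=1..N. cy j k * incr L2 k)"
      proof -
        have "(\<Sum>k=1..N. cx j k * incr L1 k) = u * ext0 L1 (j - 1) + (- v) * (ext0 L1 N - ext0 L1 (j - 1))"
          unfolding cx_def by (rule sum_step_mult_incr) (use j in auto)
        moreover have "(\<Sum>k=1..N. cy j k * incr L2 k) = (- u) * ext0 L2 j + v * (ext0 L2 N - ext0 L2 j)"
          unfolding cy_def by (rule sum_step_mult_incr) (use j in simp)
        ultimately show ?thesis by (simp add: r_def algebra_simps)
      qed
      then show "real N powr r * (T j powr r * exp (- v * (ext0 L1 N - ext0 L2 N)))
          = real N powr r * exp (\<Sum>k=1..N. cx j k * incr L1 k) * exp (\<Sum>k=1..N. cy j k * incr L2 k)"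
        by (simp add: T_def powr_def mult.assoc flip: exp_add)
    qed
    finally show ?thesis .
  qed
  show ?thesis
    unfolding exp_linear_majorant_def
    using coeffs bound by (intro exI[of _ "{1..N}"] exI[of _ "\<lambda>_. real N powr r"] exI[of _ cx] exI[of _ cy]) auto
qed

lemma exp_linear_majorant_Vfun:
  assumes "- Min (\<beta> ` {1..N}) < u"
  shows "exp_linear_majorant N \<beta> (Vfun N u v)"
  using assms exp_linear_majorant_Vfun_nonneg exp_linear_majorant_Vfun_neg
  unfolding beta_plus_pos_iff[symmetric] by (cases "0 \<le> u + v") auto

lemma statLG_weight_pos: "0 < statLG_weight N \<beta> u v z"
  unfolding statLG_weight_def using Vfun_pos[OF N_ge_1] lgrw_dens_pos[OF beta_pos] by simp

lemma statLG_weight_nonneg: "0 \<le> statLG_weight N \<beta> u v z"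
  using statLG_weight_pos less_imp_le by blast

lemma nn_integral_statLG_weight_finite:
  assumes "- Min (\<beta> ` {1..N}) < u"
  shows "(\<integral>\<^sup>+L1. (\<integral>\<^sup>+L2. ennreal (statLG_weight N \<beta> u v (L1, L2)) \<partial>RN N) \<partial>RN N) < \<infinity>"
    and "(\<integral>\<^sup>+L2. ennreal (statLG_weight N \<beta> u v (L1, L2)) \<partial>RN N) < \<infinity>"
  using nn_integral_lgrw_pair_finite[OF beta_pos exp_linear_majorant_Vfun[OF assms]]
  by (simp_all add: statLG_weight_def)

lemma statLG_norm_eq_pair_integral:
  assumes "- Min (\<beta> ` {1..N}) < u"
  shows "statLG_norm N \<beta> u v = (\<integral>z. statLG_weight N \<beta> u v z \<partial>(RN N \<Otimes>\<^sub>M RN N))"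
    and "(\<integral>\<^sup>+z. ennreal (statLG_weight N \<beta> u v z) \<partial>(RN N \<Otimes>\<^sub>M RN N)) < \<infinity>"
  using iterated_integral_eq_pair_integral[OF sigma_finite_RN sigma_finite_RN _ statLG_weight_nonneg
      nn_integral_statLG_weight_finite(1)[OF assms]]
  by (simp_all add: statLG_norm_eq)

lemma has_holomorphic_extension_statLG_norm:
  assumes "- Min (\<beta> ` {1..N}) < x"
  shows "has_holomorphic_extension (\<lambda>u. statLG_norm N \<beta> u v) x"
proof (rule has_holomorphic_extension_cong)
  let ?a = "\<lambda>z. ln (Vsum N (fst z) (snd z))"
  note weight_eq = statLG_weight_eq_exp_ln_Vsum[OF N_ge_1]
  show "has_holomorphic_extension (\<lambda>u. \<integral>z. statLG_weight N \<beta> 0 v z * exp (- u * ?a z) \<partial>(RN N \<Otimes>\<^sub>M RN N)) x"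
  proof (rule has_holomorphic_extension_laplace[where c = "- Min (\<beta> ` {1..N})" and d = "x + 1"])
    show "(\<integral>\<^sup>+z. ennreal (statLG_weight N \<beta> 0 v z * exp (- u * ?a z)) \<partial>(RN N \<Otimes>\<^sub>M RN N)) < \<infinity>"
      if "- Min (\<beta> ` {1..N}) < u" for u
      unfolding weight_eq by (rule statLG_norm_eq_pair_integral(2)[OF that])
  qed (use assms statLG_weight_nonneg in auto)
  show "0 < x + Min (\<beta> ` {1..N})" using assms by simp
  show "statLG_norm N \<beta> y v = (\<integral>z. statLG_weight N \<beta> 0 v z * exp (- y * ?a z) \<partial>(RN N \<Otimes>\<^sub>M RN N))"
    if "\<bar>y - x\<bar> < x + Min (\<beta> ` {1..N})" for y
    unfolding weight_eq using that by (intro statLG_norm_eq_pair_integral(1)) simp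
qed

lemma statLG_norm_pos:
  assumes "- Min (\<beta> ` {1..N}) < u"
  shows "0 < statLG_norm N \<beta> u v"
  unfolding statLG_norm_eq_pair_integral(1)[OF assms]
proof (rule integral_pos_if_pos)
  show "integrable (RN N \<Otimes>\<^sub>M RN N) (statLG_weight N \<beta> u v)"
    using statLG_norm_eq_pair_integral(2)[OF assms] by (intro integrableI_bounded) (auto simp: statLG_weight_nonneg)
  show "emeasure (RN N \<Otimes>\<^sub>M RN N) (space (RN N \<Otimes>\<^sub>M RN N)) \<noteq> 0"
    by (intro emeasure_space_pair_nonzero sigma_finite_RN emeasure_space_RN_nonzero)
qed (rule statLG_weight_pos)

lemma has_holomorphic_extension_statLG_marg_numerator:
  assumes "- Min (\<beta> ` {1..N}) < x"
  shows "has_holomorphic_extension (\<lambda>u. \<integral>L2. statLG_weight N \<beta> u v (L1, L2) \<partial>RN N) x"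
proof (rule has_holomorphic_extension_cong)
  let ?a = "\<lambda>L2. ln (Vsum N L1 L2)"
  have weight_eq: "statLG_weight N \<beta> 0 v (L1, L2) * exp (- u * ?a L2) = statLG_weight N \<beta> u v (L1, L2)" for u L2
    using statLG_weight_eq_exp_ln_Vsum[OF N_ge_1, where z = "(L1, L2)"] by simp
  show "has_holomorphic_extension (\<lambda>u. \<integral>L2. statLG_weight N \<beta> 0 v (L1, L2) * exp (- u * ?a L2) \<partial>RN N) x"
  proof (rule has_holomorphic_extension_laplace[where c = "- Min (\<beta> ` {1..N})" and d = "x + 1"])
    show "?a \<in> borel_measurable (RN N)" unfolding Vsum_def by measurable
    show "(\<integral>\<^sup>+L2. ennreal (statLG_weight N \<beta> 0 v (L1, L2) * exp (- u * ?a L2)) \<partial>RN N) < \<infinity>"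
      if "- Min (\<beta> ` {1..N}) < u" for u
      unfolding weight_eq by (rule nn_integral_statLG_weight_finite(2)[OF that])
  qed (use assms statLG_weight_nonneg in auto)
  show "0 < x + Min (\<beta> ` {1..N})" using assms by simp
  show "(\<integral>L2. statLG_weight N \<beta> y v (L1, L2) \<partial>RN N) = (\<integral>L2. statLG_weight N \<beta> 0 v (L1, L2) * exp (- y * ?a L2) \<partial>RN N)"
    for y
    unfolding weight_eq ..
qed

lemma real_analytic_on_statLG_marg:
  "real_analytic_on (\<lambda>u. statLG_marg N \<beta> u v L1) {- Min (\<beta> ` {1..N})<..}"
  unfolding statLG_marg_eq
  by (intro real_analytic_onI_holomorphic_extension has_holomorphic_extension_divide
      has_holomorphic_extension_statLG_marg_numerator has_holomorphic_extension_statLG_norm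
      statLG_norm_pos[THEN less_imp_neq, THEN not_sym]) auto


lemma U_theta_pos:
  assumes "j \<in> {1..N}"
  shows "0 < U_theta N \<beta> v j"
proof -
  have "0 < \<beta> 1" "0 < \<beta> 1 + v" using beta_pos beta_plus_v_pos N_ge_1 by auto
  moreover have "j < N \<Longrightarrow> 0 < \<beta> (j + 1)" using beta_pos assms by auto
  ultimately show ?thesis by (auto simp: U_theta_def)
qed

text \<open>Each factor of \<open>U_cond\<close> is \<open>t\<^sup>\<theta> e\<^sup>-\<^sup>t/\<Gamma>(\<theta>)\<close> with \<open>t = 1/x\<close>.\<close>
lemma U_cond_bounds:
  "0 \<le> U_cond N \<beta> v L' w L" "U_cond N \<beta> v L' w L \<le> U_cond_bound N \<beta> v"
  unfolding U_cond_def U_cond_bound_def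
  by (intro prod_nonneg prod_mono conjI invgamma_dens_mult_le U_theta_pos; assumption)+

lemma U_cond_bound_nonneg: "0 \<le> U_cond_bound N \<beta> v"
  using U_cond_bounds order_trans by blast

lemma U_integrand_nonneg: "0 \<le> U_integrand N \<beta> v L' u z"
  unfolding U_integrand_def using U_cond_bounds(1) invgamma_kernel_nonneg statLG_weight_nonneg by simp

lemma U_integrand_le:
  "U_integrand N \<beta> v L' u (L, w, L2) \<le> U_cond_bound N \<beta> v * invgamma_kernel (\<beta> 1 + u) w * statLG_weight N \<beta> u v (L, L2)"
proof -
  have "invgamma_kernel (\<beta> 1 + u) w * U_cond N \<beta> v L' w L \<le> invgamma_kernel (\<beta> 1 + u) w * U_cond_bound N \<beta> v"
    by (intro mult_left_mono U_cond_bounds(2) invgamma_kernel_nonneg)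
  from mult_right_mono[OF this statLG_weight_nonneg[where u = u and z = "(L, L2)"]]
  show ?thesis
    unfolding U_integrand_def fst_conv snd_conv by (simp only: mult_ac)
qed

lemma nn_integral_U_integrand_finite:
  assumes u: "- Min (\<beta> ` {1..N}) < u"
  shows "(\<integral>\<^sup>+w. (\<integral>\<^sup>+L2. ennreal (U_integrand N \<beta> v L' u (L, w, L2)) \<partial>RN N) \<partial>lborel) < \<infinity>"
    and "(\<integral>\<^sup>+L. (\<integral>\<^sup>+w. (\<integral>\<^sup>+L2. ennreal (U_integrand N \<beta> v L' u (L, w, L2)) \<partial>RN N) \<partial>lborel) \<partial>RN N) < \<infinity>"
proof -
  define C where "C = ennreal (U_cond_bound N \<beta> v)"
  define K where "K = (\<integral>\<^sup>+w. ennreal (invgamma_kernel (\<beta> 1 + u) w) \<partial>lborel)"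
  define J where "J L = (\<integral>\<^sup>+L2. ennreal (statLG_weight N \<beta> u v (L, L2)) \<partial>RN N)" for L
  have "\<forall>k\<in>{1..N}. 0 < \<beta> k + u" using u beta_plus_pos_iff by blast
  then have "0 < \<beta> 1 + u" using N_ge_1 by auto
  then have Kfin: "K < \<infinity>" unfolding K_def by (rule nn_integral_invgamma_kernel_finite)
  have Jm: "J \<in> borel_measurable (RN N)"
    unfolding J_def by (rule sigma_finite_measure.borel_measurable_nn_integral_fst[OF sigma_finite_RN, simplified])
      measurable
  have inner: "(\<integral>\<^sup>+w. (\<integral>\<^sup>+L2. ennreal (U_integrand N \<beta> v L' u (L, w, L2)) \<partial>RN N) \<partial>lborel) \<le> C * K * J L" for L
  proof -
    have "(\<integral>\<^sup>+w. (\<integral>\<^sup>+L2. ennreal (U_integrand N \<beta> v L' u (L, w, L2)) \<partial>RN N) \<partial>lborel)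
        \<le> (\<integral>\<^sup>+w. (\<integral>\<^sup>+L2. C * ennreal (invgamma_kernel (\<beta> 1 + u) w) * ennreal (statLG_weight N \<beta> u v (L, L2)) \<partial>RN N) \<partial>lborel)"
      using U_cond_bound_nonneg invgamma_kernel_nonneg statLG_weight_nonneg U_integrand_le
      by (intro nn_integral_mono) (simp add: C_def ennreal_mult[symmetric] ennreal_leI del: ennreal_mult')
    also have "\<dots> = C * K * J L"
      unfolding K_def J_def by (simp add: nn_integral_multc nn_integral_cmult)
    finally show ?thesis .
  qed
  show "(\<integral>\<^sup>+w. (\<integral>\<^sup>+L2. ennreal (U_integrand N \<beta> v L' u (L, w, L2)) \<partial>RN N) \<partial>lborel) < \<infinity>"
    using inner[of L] Kfin nn_integral_statLG_weight_finite(2)[OF u]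
    by (simp add: C_def J_def ennreal_mult_less_top order_le_less_trans)
  have "(\<integral>\<^sup>+L. (\<integral>\<^sup>+w. (\<integral>\<^sup>+L2. ennreal (U_integrand N \<beta> v L' u (L, w, L2)) \<partial>RN N) \<partial>lborel) \<partial>RN N)
      \<le> C * K * (\<integral>\<^sup>+L. J L \<partial>RN N)"
    using inner by (subst nn_integral_cmult[OF Jm, symmetric]) (intro nn_integral_mono)
  also have "\<dots> < \<infinity>"
    using Kfin nn_integral_statLG_weight_finite(1)[OF u] by (simp add: C_def J_def ennreal_mult_less_top)
  finally show "(\<integral>\<^sup>+L. (\<integral>\<^sup>+w. (\<integral>\<^sup>+L2. ennreal (U_integrand N \<beta> v L' u (L, w, L2)) \<partial>RN N) \<partial>lborel) \<partial>RN N) < \<infinity>" .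
qed

lemma U_integrand_triple_integral:
  assumes u: "- Min (\<beta> ` {1..N}) < u"
  shows "(\<integral>L. (\<integral>w. (\<integral>L2. U_integrand N \<beta> v L' u (L, w, L2) \<partial>RN N) \<partial>lborel) \<partial>RN N)
      = (\<integral>z. U_integrand N \<beta> v L' u z \<partial>(RN N \<Otimes>\<^sub>M (lborel \<Otimes>\<^sub>M RN N)))"
    and "(\<integral>\<^sup>+z. ennreal (U_integrand N \<beta> v L' u z) \<partial>(RN N \<Otimes>\<^sub>M (lborel \<Otimes>\<^sub>M RN N))) < \<infinity>"
proof -
  have sf: "sigma_finite_measure (lborel \<Otimes>\<^sub>M RN N)"
    by (intro sigma_finite_pair_measure lborel.sigma_finite_measure_axioms sigma_finite_RN)
  have inner: "(\<integral>w. (\<integral>L2. U_integrand N \<beta> v L' u (L, w, L2) \<partial>RN N) \<partial>lborel)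
      = (\<integral>p. U_integrand N \<beta> v L' u (L, p) \<partial>(lborel \<Otimes>\<^sub>M RN N))"
    and nn_inner: "(\<integral>\<^sup>+p. ennreal (U_integrand N \<beta> v L' u (L, p)) \<partial>(lborel \<Otimes>\<^sub>M RN N))
      = (\<integral>\<^sup>+w. (\<integral>\<^sup>+L2. ennreal (U_integrand N \<beta> v L' u (L, w, L2)) \<partial>RN N) \<partial>lborel)" for L
    using iterated_integral_eq_pair_integral(1)[OF lborel.sigma_finite_measure_axioms sigma_finite_RN _ U_integrand_nonneg
          nn_integral_U_integrand_finite(1)[OF u]]
      sigma_finite_measure.nn_integral_fst[OF sigma_finite_RN, of "\<lambda>p. ennreal (U_integrand N \<beta> v L' u (L, p))" lborel]
    by simp_all
  note triple = iterated_integral_eq_pair_integral[OF sigma_finite_RN sf measurable_U_integrand U_integrand_nonneg]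
  show "(\<integral>L. (\<integral>w. (\<integral>L2. U_integrand N \<beta> v L' u (L, w, L2) \<partial>RN N) \<partial>lborel) \<partial>RN N)
      = (\<integral>z. U_integrand N \<beta> v L' u z \<partial>(RN N \<Otimes>\<^sub>M (lborel \<Otimes>\<^sub>M RN N)))"
    "(\<integral>\<^sup>+z. ennreal (U_integrand N \<beta> v L' u z) \<partial>(RN N \<Otimes>\<^sub>M (lborel \<Otimes>\<^sub>M RN N))) < \<infinity>"
    using triple nn_integral_U_integrand_finite(2)[OF u] by (simp_all add: inner nn_inner)
qed

lemma real_analytic_on_integral_U_trans_statLG_marg:
  "real_analytic_on (\<lambda>u. \<integral>L. U_trans N \<beta> u v L' L * statLG_marg N \<beta> u v L \<partial>RN N) {- Min (\<beta> ` {1..N})<..}"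
proof (rule real_analytic_onI_holomorphic_extension)
  fix x assume "x \<in> {- Min (\<beta> ` {1..N})<..}"
  then have x: "- Min (\<beta> ` {1..N}) < x" by simp
  let ?M = "RN N \<Otimes>\<^sub>M (lborel \<Otimes>\<^sub>M RN N)"
  let ?a = "\<lambda>z. ln (fst (snd z)) + ln (Vsum N (fst z) (snd (snd z)))"
  note U_eq = U_integrand_eq_exp[OF N_ge_1, symmetric]
  have "has_holomorphic_extension (\<lambda>u. \<integral>z. U_integrand N \<beta> v L' 0 z * exp (- u * ?a z) \<partial>?M) x"
  proof (rule has_holomorphic_extension_laplace[where c = "- Min (\<beta> ` {1..N})" and d = "x + 1"])
    show "(\<integral>\<^sup>+z. ennreal (U_integrand N \<beta> v L' 0 z * exp (- u * ?a z)) \<partial>?M) < \<infinity>"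
      if "- Min (\<beta> ` {1..N}) < u" for u
      unfolding U_eq by (rule U_integrand_triple_integral(2)[OF that])
  qed (use x U_integrand_nonneg in auto)
  then have "has_holomorphic_extension
      (\<lambda>u. rGamma (\<beta> 1 + u) * (\<integral>z. U_integrand N \<beta> v L' 0 z * exp (- u * ?a z) \<partial>?M) / statLG_norm N \<beta> u v) x"
    using x statLG_norm_pos[OF x]
    by (intro has_holomorphic_extension_divide has_holomorphic_extension_mult
        has_holomorphic_extension_rGamma has_holomorphic_extension_statLG_norm) auto
  then show "has_holomorphic_extension (\<lambda>u. \<integral>L. U_trans N \<beta> u v L' L * statLG_marg N \<beta> u v L \<partial>RN N) x"
  proof (rule has_holomorphic_extension_cong)
    show "0 < x + Min (\<beta> ` {1..N})" using x by simp
    show "(\<integral>L. U_trans N \<beta> y v L' L * statLG_marg N \<beta> y v L \<partial>RN N)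
        = rGamma (\<beta> 1 + y) * (\<integral>z. U_integrand N \<beta> v L' 0 z * exp (- y * ?a z) \<partial>?M) / statLG_norm N \<beta> y v"
      if "\<bar>y - x\<bar> < x + Min (\<beta> ` {1..N})" for y
    proof -
      have "- Min (\<beta> ` {1..N}) < y" using that abs_less_iff[of "y - x"] by linarith
      then show ?thesis
        unfolding U_eq by (simp add: integral_U_trans_statLG_marg_eq U_integrand_triple_integral(1))
    qed
  qed
qed

end

lemma tau1_image:
  assumes "1 \<le> N"
  shows "tau1 N \<beta> ` {1..N} = \<beta> ` {1..N}"
proof (intro equalityI subsetI)
  fix y assume "y \<in> \<beta> ` {1..N}"
  then obtain k where k: "k \<in> {1..N}" "y = \<beta> k" by auto
  show "y \<in> tau1 N \<beta> ` {1..N}"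
  proof (cases "k = 1")
    case True
    with k assms show ?thesis by (auto simp: tau1_def intro!: image_eqI[of _ _ N])
  next
    case False
    with k show ?thesis by (auto simp: tau1_def intro!: image_eqI[of _ _ "k - 1"])
  qed
qed (auto simp: tau1_def split: if_splits)

theorem proposition3p16:
  fixes N :: nat and \<beta> :: "nat \<Rightarrow> real" and v :: real and L' :: "nat \<Rightarrow> real"
  assumes "N \<ge> 1"
    and "\<forall>i\<in>{1..N}. \<beta> i > 0"
    and "\<forall>i\<in>{1..N}. \<beta> i + v > 0"
  shows "real_analytic_on
           (\<lambda>u. \<integral>L. U_trans N \<beta> u v L' L * statLG_marg N \<beta> u v L \<partial>RN N)
           {- Min (\<beta> ` {1..N})<..}
       \<and> real_analytic_on (\<lambda>u. statLG_marg N (tau1 N \<beta>) u v L')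
           {- Min (\<beta> ` {1..N})<..}"
proof -
  interpret statLG_params N \<beta> v
    using assms by unfold_locales auto
  have tau: "tau1 N \<beta> ` {1..N} = \<beta> ` {1..N}"
    using assms(1) by (rule tau1_image)
  have "tau1 N \<beta> i \<in> \<beta> ` {1..N}" if "i \<in> {1..N}" for i
    using that tau by blast
  then interpret shifted: statLG_params N "tau1 N \<beta>" v
    using assms by unfold_locales fastforce+
  show ?thesis
    using real_analytic_on_integral_U_trans_statLG_marg shifted.real_analytic_on_statLG_marg
    unfolding tau by blast
qed

end
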